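(* Let $(M,d)$ be a pointed metric space such that $\mathcal F(M)$ has the Krein–Milman property and every extreme point of $B_{\mathcal F(M)}$ is a molecule. Then every $f\in\mathrm{Lip}_0(M)$ which attains its norm as a functional on $\mathcal F(M)$ strongly attains its norm, i.e. there are $x\neq y$ in $M$ with $|f(x)-f(y)|=\|f\|_L\,d(x,y)$. In other words, $NA(\mathcal F(M),\mathbb R)=\mathrm{Lip}_{SNA}(M,\mathbb R)$. Consequently $\mathrm{Lip}_{SNA}(M,\mathbb R)$ is norm dense in $\mathrm{Lip}_0(M)$.
   Context: A pointed metric space $M$ has a distinguished origin $0$. $\mathrm{Lip}_0(M)$ is the Banach space of real Lipschitz functions on $M$ vanishing at $0$ with the best Lipschitz constant $\|\cdot\|_L$ as norm; $\delta(x)$ is evaluation at $x$, and the Lipschitz free space $\mathcal F(M)$ is the closed linear span of $\delta(M)$ in $\mathrm{Lip}_0(M)^*$, with $\mathcal F(M)^*=\mathrm{Lip}_0(M)$. Molecules are $m_{xy}=(\delta(x)-\delta(y))/d(x,y)$, $x\ne y$. $NA(\mathcal F(M),\mathbb R)$ is the set of $f\in\mathrm{Lip}_0(M)=\mathcal F(M)^*$ attaining their norm on $B_{\mathcal F(M)}$; $\mathrm{Lip}_{SNA}(M,\mathbb R)$ is the set of $f\in\mathrm{Lip}_0(M)$ for which there exist $x\neq y$ with $|f(x)-f(y)|=\|f\|_L d(x,y)$. A Banach space has the Krein–Milman property if every nonempty closed convex bounded subset has an extreme point. *)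

theory Defs
  imports "HOL-Analysis.Analysis"
begin

text \<open>Pointed metric space: carrier M, metric d, base point p in M.
  Lipschitz functions are represented as functions 'a => real vanishing outside M
  (so that the representation is unique).\<close>

definition Lip0 :: "'a set \<Rightarrow> ('a \<Rightarrow> 'a \<Rightarrow> real) \<Rightarrow> 'a \<Rightarrow> ('a \<Rightarrow> real) set" where
  "Lip0 M d p = {f. (\<forall>x. x \<notin> M \<longrightarrow> f x = 0) \<and> f p = 0 \<and>
      (\<exists>L. \<forall>x\<in>M. \<forall>y\<in>M. \<bar>f x - f y\<bar> \<le> L * d x y)}"

definition lipnorm :: "'a set \<Rightarrow> ('a \<Rightarrow> 'a \<Rightarrow> real) \<Rightarrow> ('a \<Rightarrow> real) \<Rightarrow> real" where
  "lipnorm M d f = Sup ({0} \<union> {\<bar>f x - f y\<bar> / d x y | x y. x \<in> M \<and> y \<in> M \<and> x \<noteq> y})"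

text \<open>Functionals on Lip_0(M), represented as maps vanishing outside Lip_0(M).\<close>
type_synonym 'a functional = "('a \<Rightarrow> real) \<Rightarrow> real"

definition delta :: "'a set \<Rightarrow> ('a \<Rightarrow> 'a \<Rightarrow> real) \<Rightarrow> 'a \<Rightarrow> 'a \<Rightarrow> 'a functional" where
  "delta M d p x = (\<lambda>f. if f \<in> Lip0 M d p then f x else 0)"

definition dnorm :: "'a set \<Rightarrow> ('a \<Rightarrow> 'a \<Rightarrow> real) \<Rightarrow> 'a \<Rightarrow> 'a functional \<Rightarrow> real" where
  "dnorm M d p \<phi> = Sup ({0} \<union> {\<bar>\<phi> f\<bar> | f. f \<in> Lip0 M d p \<and> lipnorm M d f \<le> 1})"

definition delta_span :: "'a set \<Rightarrow> ('a \<Rightarrow> 'a \<Rightarrow> real) \<Rightarrow> 'a \<Rightarrow> 'a functional set" where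
  "delta_span M d p = {\<psi>. \<exists>S a. finite S \<and> S \<subseteq> M \<and>
        \<psi> = (\<lambda>f. \<Sum>x\<in>S. a x * delta M d p x f)}"

text \<open>Lipschitz free space: closure of the span of delta(M) in the dual norm.\<close>
definition FreeSp :: "'a set \<Rightarrow> ('a \<Rightarrow> 'a \<Rightarrow> real) \<Rightarrow> 'a \<Rightarrow> 'a functional set" where
  "FreeSp M d p = {\<phi>. (\<forall>g. g \<notin> Lip0 M d p \<longrightarrow> \<phi> g = 0) \<and>
      (\<forall>\<epsilon>>0. \<exists>\<psi>\<in>delta_span M d p. \<forall>f\<in>Lip0 M d p.
          \<bar>\<phi> f - \<psi> f\<bar> \<le> \<epsilon> * lipnorm M d f)}"

definition free_ball :: "'a set \<Rightarrow> ('a \<Rightarrow> 'a \<Rightarrow> real) \<Rightarrow> 'a \<Rightarrow> 'a functional set" where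
  "free_ball M d p = {\<phi> \<in> FreeSp M d p. dnorm M d p \<phi> \<le> 1}"

definition molecule :: "'a set \<Rightarrow> ('a \<Rightarrow> 'a \<Rightarrow> real) \<Rightarrow> 'a \<Rightarrow> 'a \<Rightarrow> 'a \<Rightarrow> 'a functional" where
  "molecule M d p x y = (\<lambda>f. (delta M d p x f - delta M d p y f) / d x y)"

definition fconvex :: "'a functional set \<Rightarrow> bool" where
  "fconvex C \<longleftrightarrow> (\<forall>\<phi>\<in>C. \<forall>\<psi>\<in>C. \<forall>t::real. 0 \<le> t \<and> t \<le> 1 \<longrightarrow>
       (\<lambda>f. t * \<phi> f + (1 - t) * \<psi> f) \<in> C)"

definition fextreme_point :: "'a functional set \<Rightarrow> 'a functional \<Rightarrow> bool" where
  "fextreme_point C e \<longleftrightarrow> e \<in> C \<and> (\<forall>\<phi>\<in>C. \<forall>\<psi>\<in>C. \<forall>t::real. 0 < t \<and> t < 1 \<and>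
       e = (\<lambda>f. t * \<phi> f + (1 - t) * \<psi> f) \<longrightarrow> \<phi> = \<psi>)"

definition free_KMP :: "'a set \<Rightarrow> ('a \<Rightarrow> 'a \<Rightarrow> real) \<Rightarrow> 'a \<Rightarrow> bool" where
  "free_KMP M d p \<longleftrightarrow> (\<forall>C. C \<subseteq> FreeSp M d p \<and> C \<noteq> {} \<and> fconvex C
      \<and> (\<exists>R. \<forall>\<phi>\<in>C. dnorm M d p \<phi> \<le> R)
      \<and> (\<forall>\<phi>\<in>FreeSp M d p. (\<forall>\<epsilon>>0. \<exists>\<psi>\<in>C. dnorm M d p (\<lambda>f. \<phi> f - \<psi> f) < \<epsilon>) \<longrightarrow> \<phi> \<in> C)
      \<longrightarrow> (\<exists>e. fextreme_point C e))"

definition NA_free :: "'a set \<Rightarrow> ('a \<Rightarrow> 'a \<Rightarrow> real) \<Rightarrow> 'a \<Rightarrow> ('a \<Rightarrow> real) set" where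
  "NA_free M d p = {f \<in> Lip0 M d p. \<exists>\<phi>\<in>free_ball M d p. \<bar>\<phi> f\<bar> = lipnorm M d f}"

definition Lip_SNA :: "'a set \<Rightarrow> ('a \<Rightarrow> 'a \<Rightarrow> real) \<Rightarrow> 'a \<Rightarrow> ('a \<Rightarrow> real) set" where
  "Lip_SNA M d p = {f \<in> Lip0 M d p. \<exists>x\<in>M. \<exists>y\<in>M. x \<noteq> y \<and>
       \<bar>f x - f y\<bar> = lipnorm M d f * d x y}"

end

theory Submission
  imports Defs
begin

text \<open>If \<open>f\<close> attains its norm at some functional of the unit ball of \<open>F(M)\<close>, the functionals at
  which it does so form a nonempty closed bounded convex face of the ball. By the Krein--Milman
  property this face has an extreme point, which is then extreme in the whole ball and hence a
  molecule \<open>m\<^sub>x\<^sub>y\<close>; so \<open>f(x) - f(y) = \<parallel>f\<parallel> d(x,y)\<close>. The converse inclusion is witnessed by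
  molecules. Density follows from the Bishop--Phelps theorem for the pair \<open>(F(M), Lip\<^sub>0(M))\<close>:
  an Ekeland-type maximal point \<open>\<phi>\<^sub>0\<close> of the ball is separated by Hahn--Banach from a cone, and the
  separating functional, being a bounded functional on \<open>F(M)\<close>, is a small Lipschitz function \<open>g\<close>
  such that \<open>f + g\<close> attains its norm at \<open>\<phi>\<^sub>0\<close>.\<close>

lemma le_if_le_plus_eps_mult:
  fixes X Y K :: real
  assumes le: "\<And>e. e > 0 \<Longrightarrow> X \<le> Y + e * K" and K: "0 \<le> K"
  shows "X \<le> Y"
proof (rule field_le_epsilon)
  fix e :: real assume e: "0 < e"
  have "X \<le> Y + e / (K + 1) * K" using le[of "e / (K + 1)"] e K by simp
  also have "e / (K + 1) * K \<le> e" using e K by (simp add: field_simps)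
  finally show "X \<le> Y + e" by simp
qed

lemma le_if_le_plus_half_pow_mult:
  fixes X Y K :: real
  assumes le: "\<And>k. X \<le> Y + (1/2) ^ k * K" and K: "0 \<le> K"
  shows "X \<le> Y"
proof (rule le_if_le_plus_eps_mult[OF _ K])
  fix e :: real assume "e > 0"
  then obtain k where "(1/2::real) ^ k < e" using real_arch_pow_inv[of e "1/2"] by auto
  then show "X \<le> Y + e * K" using le[of k] K by (smt (verit) mult_right_mono)
qed

section \<open>Hahn--Banach on spaces of real functions\<close>

definition linear_on :: "('b \<Rightarrow> real) set \<Rightarrow> (('b \<Rightarrow> real) \<Rightarrow> real) \<Rightarrow> bool" where
  "linear_on V h \<longleftrightarrow>
    (\<forall>x\<in>V. \<forall>y\<in>V. h (\<lambda>b. x b + y b) = h x + h y) \<and> (\<forall>x\<in>V. \<forall>c. h (\<lambda>b. c * x b) = c * h x)"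

lemma linear_onI:
  assumes "\<And>x y. x \<in> V \<Longrightarrow> y \<in> V \<Longrightarrow> h (\<lambda>b. x b + y b) = h x + h y"
    and "\<And>x c. x \<in> V \<Longrightarrow> h (\<lambda>b. c * x b) = c * h x"
  shows "linear_on V h"
  using assms unfolding linear_on_def by blast

lemma linear_on_add: "linear_on V h \<Longrightarrow> x \<in> V \<Longrightarrow> y \<in> V \<Longrightarrow> h (\<lambda>b. x b + y b) = h x + h y"
  and linear_on_scale: "linear_on V h \<Longrightarrow> x \<in> V \<Longrightarrow> h (\<lambda>b. c * x b) = c * h x"
  unfolding linear_on_def by blast+

locale fun_subspace =
  fixes V :: "('b \<Rightarrow> real) set"
  assumes zero: "(\<lambda>_. 0) \<in> V"
    and add: "x \<in> V \<Longrightarrow> y \<in> V \<Longrightarrow> (\<lambda>b. x b + y b) \<in> V"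
    and scale: "x \<in> V \<Longrightarrow> (\<lambda>b. c * x b) \<in> V"
begin

lemma diff: "x \<in> V \<Longrightarrow> y \<in> V \<Longrightarrow> (\<lambda>b. x b - y b) \<in> V"
  using add[of x "\<lambda>b. (-1) * y b"] scale[of y "-1"] by simp

lemma linear_on_zero: "linear_on V h \<Longrightarrow> h (\<lambda>_. 0) = 0"
  using linear_on_scale[OF _ zero, of h 0] by simp

lemma linear_on_diff: "linear_on V h \<Longrightarrow> x \<in> V \<Longrightarrow> y \<in> V \<Longrightarrow> h (\<lambda>b. x b - y b) = h x - h y"
  using linear_on_add[of V h x "\<lambda>b. (-1) * y b"] linear_on_scale[of V h y "-1"] scale[of y "-1"]
  by simp

lemma linear_on_sum:
  assumes h: "linear_on V h" and S: "finite S" and u: "\<And>x. x \<in> S \<Longrightarrow> u x \<in> V"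
  shows "h (\<lambda>b. \<Sum>x\<in>S. a x * u x b) = (\<Sum>x\<in>S. a x * h (u x))"
proof -
  have "(\<lambda>b. \<Sum>x\<in>S. a x * u x b) \<in> V \<and> h (\<lambda>b. \<Sum>x\<in>S. a x * u x b) = (\<Sum>x\<in>S. a x * h (u x))"
    using S u
  proof (induction S rule: finite_induct)
    case empty
    show ?case using zero linear_on_zero[OF h] by simp
  next
    case (insert y S)
    then have IH: "(\<lambda>b. \<Sum>x\<in>S. a x * u x b) \<in> V" "h (\<lambda>b. \<Sum>x\<in>S. a x * u x b) = (\<Sum>x\<in>S. a x * h (u x))"
      and uy: "u y \<in> V" by simp_all
    have "h (\<lambda>b. a y * u y b + (\<Sum>x\<in>S. a x * u x b)) = a y * h (u y) + h (\<lambda>b. \<Sum>x\<in>S. a x * u x b)"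
      using linear_on_add[OF h scale[OF uy] IH(1)] linear_on_scale[OF h uy] by simp
    then show ?case using insert(1,2) IH add[OF scale[OF uy] IH(1)] by simp
  qed
  then show ?thesis ..
qed

text \<open>Partial linear functionals are encoded by their graphs, so that a chain of them has its union
  as an upper bound.\<close>

definition dominated_linear_graph :: "(('b \<Rightarrow> real) \<Rightarrow> real) \<Rightarrow> (('b \<Rightarrow> real) \<times> real) set \<Rightarrow> bool" where
  "dominated_linear_graph q G \<longleftrightarrow> G \<subseteq> V \<times> UNIV \<and> ((\<lambda>_. 0), 0) \<in> G
     \<and> (\<forall>x a y b. (x, a) \<in> G \<longrightarrow> (y, b) \<in> G \<longrightarrow> ((\<lambda>z. x z + y z), a + b) \<in> G)
     \<and> (\<forall>x a c. (x, a) \<in> G \<longrightarrow> ((\<lambda>z. c * x z), c * a) \<in> G)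
     \<and> (\<forall>x a b. (x, a) \<in> G \<longrightarrow> (x, b) \<in> G \<longrightarrow> a = b)
     \<and> (\<forall>x a. (x, a) \<in> G \<longrightarrow> a \<le> q x)"

lemma dominated_linear_graphD:
  assumes "dominated_linear_graph q G"
  shows "G \<subseteq> V \<times> UNIV" "((\<lambda>_. 0), 0) \<in> G"
    "\<And>x a y b. (x, a) \<in> G \<Longrightarrow> (y, b) \<in> G \<Longrightarrow> ((\<lambda>z. x z + y z), a + b) \<in> G"
    "\<And>x a c. (x, a) \<in> G \<Longrightarrow> ((\<lambda>z. c * x z), c * a) \<in> G"
    "\<And>x a b. (x, a) \<in> G \<Longrightarrow> (x, b) \<in> G \<Longrightarrow> a = b"
    "\<And>x a. (x, a) \<in> G \<Longrightarrow> a \<le> q x"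
  using assms unfolding dominated_linear_graph_def by simp_all

lemma dominated_linear_graph_Union_chain:
  assumes C: "C \<in> chains {G. dominated_linear_graph q G}" and "C \<noteq> {}"
  shows "dominated_linear_graph q (\<Union>C)"
proof -
  have good: "dominated_linear_graph q X" if "X \<in> C" for X
    using chainsD2[OF C] that by blast
  note GD = dominated_linear_graphD[OF good]
  have common: "\<exists>Z\<in>C. (x, a) \<in> Z \<and> (y, b) \<in> Z"
    if "(x, a) \<in> X" "X \<in> C" "(y, b) \<in> Y" "Y \<in> C" for x a y b X Y
    using chainsD[OF C \<open>X \<in> C\<close> \<open>Y \<in> C\<close>] that by blast
  show ?thesis
    unfolding dominated_linear_graph_def
  proof (intro conjI allI impI)
    show "\<Union>C \<subseteq> V \<times> UNIV" using GD(1) by blast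
    obtain X where "X \<in> C" using \<open>C \<noteq> {}\<close> by blast
    then show "((\<lambda>_. 0), 0) \<in> \<Union>C" using GD(2) by blast
  next
    fix x a y b assume "(x, a) \<in> \<Union>C" "(y, b) \<in> \<Union>C"
    then obtain Z where "Z \<in> C" "(x, a) \<in> Z" "(y, b) \<in> Z" using common by (meson UnionE)
    then show "((\<lambda>z. x z + y z), a + b) \<in> \<Union>C" using GD(3) by blast
  next
    fix x a c assume "(x, a) \<in> \<Union>C"
    then obtain X where "X \<in> C" "(x, a) \<in> X" by blast
    then show "((\<lambda>z. c * x z), c * a) \<in> \<Union>C" using GD(4) by blast
  next
    fix x a b assume "(x, a) \<in> \<Union>C" "(x, b) \<in> \<Union>C"
    then obtain Z where "Z \<in> C" "(x, a) \<in> Z" "(x, b) \<in> Z" using common by (meson UnionE)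
    then show "a = b" using GD(5) by blast
  next
    fix x a assume "(x, a) \<in> \<Union>C"
    then obtain X where "X \<in> C" "(x, a) \<in> X" by blast
    then show "a \<le> q x" using GD(6) by blast
  qed
qed

context
  fixes q :: "('b \<Rightarrow> real) \<Rightarrow> real"
  assumes q_add: "\<And>x y. x \<in> V \<Longrightarrow> y \<in> V \<Longrightarrow> q (\<lambda>b. x b + y b) \<le> q x + q y"
    and q_scale: "\<And>x c. x \<in> V \<Longrightarrow> c > 0 \<Longrightarrow> q (\<lambda>b. c * x b) = c * q x"
begin

text \<open>The one-step extension: the value \<open>c\<close> assigned to the new direction \<open>v\<close> must separate
  the two families of bounds below, which is possible by subadditivity of \<open>q\<close>.\<close>

lemma dominated_linear_graph_extension_value:
  assumes G: "dominated_linear_graph q G" and v: "v \<in> V"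
  obtains c where "\<And>w a. (w, a) \<in> G \<Longrightarrow> a - q (\<lambda>z. w z - v z) \<le> c"
    and "\<And>w a. (w, a) \<in> G \<Longrightarrow> c \<le> q (\<lambda>z. w z + v z) - a"
proof -
  note GD = dominated_linear_graphD[OF G]
  have GV: "(x, a) \<in> G \<Longrightarrow> x \<in> V" for x a using GD(1) by blast
  have sep: "a' - q (\<lambda>z. w' z - v z) \<le> q (\<lambda>z. w z + v z) - a"
    if "(w, a) \<in> G" "(w', a') \<in> G" for w a w' a'
  proof -
    have "a' + a \<le> q (\<lambda>z. (w' z - v z) + (w z + v z))" using GD(6)[OF GD(3)[OF that(2,1)]] by simp
    also have "\<dots> \<le> q (\<lambda>z. w' z - v z) + q (\<lambda>z. w z + v z)"
      using q_add[OF diff[OF GV[OF that(2)] v] add[OF GV[OF that(1)] v]] by simp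
    finally show ?thesis by simp
  qed
  define S where "S = {a - q (\<lambda>z. w z - v z) | w a. (w, a) \<in> G}"
  have "S \<noteq> {}" unfolding S_def using GD(2) by blast
  moreover have "bdd_above S" unfolding S_def using sep[OF GD(2)] by (auto intro!: bdd_aboveI)
  ultimately show ?thesis
    using sep by (intro that[of "Sup S"] cSup_upper cSup_least) (auto simp: S_def)
qed

lemma dominated_linear_graph_extension_dominated:
  assumes G: "dominated_linear_graph q G" and v: "v \<in> V" and wa: "(w, a) \<in> G"
    and c_lower: "\<And>w a. (w, a) \<in> G \<Longrightarrow> a - q (\<lambda>z. w z - v z) \<le> c"
    and c_upper: "\<And>w a. (w, a) \<in> G \<Longrightarrow> c \<le> q (\<lambda>z. w z + v z) - a"
  shows "a + t * c \<le> q (\<lambda>z. w z + t * v z)"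
proof -
  note GD = dominated_linear_graphD[OF G]
  have wV: "w \<in> V" using GD(1) wa by blast
  show ?thesis
  proof (cases t "0 :: real" rule: linorder_cases)
    case equal then show ?thesis using GD(6)[OF wa] by simp
  next
    case greater
    have "t * (c + (1/t) * a) \<le> t * q (\<lambda>z. (1/t) * w z + v z)"
      using c_upper[OF GD(4)[OF wa, of "1/t"]] greater by simp
    also have "\<dots> = q (\<lambda>z. t * ((1/t) * w z + v z))"
      using q_scale[OF add[OF scale[OF wV, of "1/t"] v] greater] by simp
    finally show ?thesis using greater by (simp add: algebra_simps)
  next
    case less
    then have s: "- t > 0" by simp
    have "(- t) * ((1/(- t)) * a - c) \<le> (- t) * q (\<lambda>z. (1/(- t)) * w z - v z)"
      using c_lower[OF GD(4)[OF wa, of "1/(- t)"]] s by (simp del: minus_divide_right)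
    also have "\<dots> = q (\<lambda>z. (- t) * ((1/(- t)) * w z - v z))"
      using q_scale[OF diff[OF scale[OF wV, of "1/(- t)"] v] s] by simp
    finally show ?thesis using s by (simp add: algebra_simps)
  qed
qed

lemma dominated_linear_graph_extend:
  assumes G: "dominated_linear_graph q G" and v: "v \<in> V" and new: "\<nexists>a. (v, a) \<in> G"
  shows "\<exists>G'. dominated_linear_graph q G' \<and> G \<subset> G'"
proof -
  note GD = dominated_linear_graphD[OF G]
  have GV: "(x, a) \<in> G \<Longrightarrow> x \<in> V" for x a using GD(1) by blast
  obtain c where c_lower: "\<And>w a. (w, a) \<in> G \<Longrightarrow> a - q (\<lambda>z. w z - v z) \<le> c"
    and c_upper: "\<And>w a. (w, a) \<in> G \<Longrightarrow> c \<le> q (\<lambda>z. w z + v z) - a"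
    using dominated_linear_graph_extension_value[OF G v] by blast
  define G' where "G' = {((\<lambda>z. w z + t * v z), a + t * c) | w a t. (w, a) \<in> G}"
  have memG': "((\<lambda>z. w z + t * v z), a + t * c) \<in> G'" if "(w, a) \<in> G" for w a t
    unfolding G'_def using that by blast
  have "dominated_linear_graph q G'"
    unfolding dominated_linear_graph_def
  proof (intro conjI allI impI)
    show "G' \<subseteq> V \<times> UNIV" unfolding G'_def using GV add scale v by blast
    show "((\<lambda>_. 0), 0) \<in> G'" using memG'[OF GD(2), of 0] by simp
  next
    fix x a y b assume "(x, a) \<in> G'" "(y, b) \<in> G'"
    then obtain w1 a1 t1 w2 a2 t2 where "(w1, a1) \<in> G" "(w2, a2) \<in> G"
      "x = (\<lambda>z. w1 z + t1 * v z)" "a = a1 + t1 * c" "y = (\<lambda>z. w2 z + t2 * v z)" "b = a2 + t2 * c"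
      unfolding G'_def by blast
    then show "((\<lambda>z. x z + y z), a + b) \<in> G'"
      using memG'[OF GD(3), of w1 a1 w2 a2 "t1 + t2"] by (simp add: algebra_simps)
  next
    fix x a k assume "(x, a) \<in> G'"
    then obtain w a1 t where "(w, a1) \<in> G" "x = (\<lambda>z. w z + t * v z)" "a = a1 + t * c"
      unfolding G'_def by blast
    then show "((\<lambda>z. k * x z), k * a) \<in> G'"
      using memG'[OF GD(4), of w a1 k "k * t"] by (simp add: algebra_simps)
  next
    fix x a b assume "(x, a) \<in> G'" "(x, b) \<in> G'"
    then obtain w1 a1 t1 w2 a2 t2 where 1: "(w1, a1) \<in> G" "x = (\<lambda>z. w1 z + t1 * v z)" "a = a1 + t1 * c"
      and 2: "(w2, a2) \<in> G" "x = (\<lambda>z. w2 z + t2 * v z)" "b = a2 + t2 * c"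
      unfolding G'_def by blast
    have eq: "w1 z - w2 z = (t2 - t1) * v z" for z
      using fun_cong[OF trans[OF 1(2)[symmetric] 2(2)], of z] by (simp add: algebra_simps)
    show "a = b"
    proof (cases "t1 = t2")
      case True
      then have "w1 = w2" using eq by (simp add: fun_eq_iff)
      then show ?thesis using GD(5) 1 2 True by blast
    next
      case False
      \<comment> \<open>otherwise \<open>v\<close> would already lie in the domain of \<open>G\<close>\<close>
      have "v = (\<lambda>z. (1 / (t2 - t1)) * (w1 z - w2 z))" using False eq by (simp add: fun_eq_iff)
      then have "(v, (1 / (t2 - t1)) * (a1 - a2)) \<in> G"
        using GD(4)[OF GD(3)[OF 1(1) GD(4)[OF 2(1), of "-1"]], of "1 / (t2 - t1)"] by simp
      then show ?thesis using new by blast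
    qed
  next
    fix x a assume "(x, a) \<in> G'"
    then show "a \<le> q x" unfolding G'_def
      using dominated_linear_graph_extension_dominated[OF G v _ c_lower c_upper] by blast
  qed
  moreover have "G \<subseteq> G'" using memG'[of _ _ 0] by auto
  moreover have "(v, c) \<in> G'" using memG'[OF GD(2), of 1] by simp
  ultimately show ?thesis using new by blast
qed

theorem Hahn_Banach:
  "\<exists>h. linear_on V h \<and> (\<forall>x\<in>V. h x \<le> q x)"
proof -
  have q0: "q (\<lambda>_. 0) = 0" using q_scale[OF zero, of 2] by simp
  have "\<exists>G\<in>{G. dominated_linear_graph q G}. \<forall>G'\<in>{G. dominated_linear_graph q G}. G \<subseteq> G' \<longrightarrow> G' = G"
  proof (rule Zorn_Lemma2, intro ballI)
    fix C assume C: "C \<in> chains {G. dominated_linear_graph q G}"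
    show "\<exists>U\<in>{G. dominated_linear_graph q G}. \<forall>G\<in>C. G \<subseteq> U"
    proof (cases "C = {}")
      case True
      have "dominated_linear_graph q {((\<lambda>_. 0), 0)}"
        unfolding dominated_linear_graph_def using zero q0 by auto
      then show ?thesis using True by blast
    qed (use dominated_linear_graph_Union_chain[OF C] in blast)
  qed
  then obtain G where G: "dominated_linear_graph q G"
    and maximal: "\<And>G'. dominated_linear_graph q G' \<Longrightarrow> G \<subseteq> G' \<Longrightarrow> G' = G" by blast
  note GD = dominated_linear_graphD[OF G]
  have total: "\<exists>a. (v, a) \<in> G" if "v \<in> V" for v
    using dominated_linear_graph_extend[OF G that] maximal by blast
  define h where "h x = (SOME a. (x, a) \<in> G)" for x
  have hG: "(x, h x) \<in> G" if "x \<in> V" for x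
    unfolding h_def using total[OF that] by (rule someI_ex)
  have "linear_on V h"
  proof (rule linear_onI)
    fix x y assume x: "x \<in> V" and y: "y \<in> V"
    show "h (\<lambda>b. x b + y b) = h x + h y"
      by (rule GD(5)[OF hG[OF add[OF x y]] GD(3)[OF hG[OF x] hG[OF y]]])
  next
    fix x c assume x: "x \<in> V"
    show "h (\<lambda>b. c * x b) = c * h x" by (rule GD(5)[OF hG[OF scale[OF x]] GD(4)[OF hG[OF x]]])
  qed
  moreover have "\<forall>x\<in>V. h x \<le> q x" using GD(6) hG by blast
  ultimately show ?thesis by blast
qed

end

context
  fixes p \<mu> :: "('b \<Rightarrow> real) \<Rightarrow> real" and K :: "('b \<Rightarrow> real) set"
  assumes p_add: "\<And>x y. x \<in> V \<Longrightarrow> y \<in> V \<Longrightarrow> p (\<lambda>b. x b + y b) \<le> p x + p y"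
    and p_scale: "\<And>x c. x \<in> V \<Longrightarrow> p (\<lambda>b. c * x b) = \<bar>c\<bar> * p x"
    and K: "K \<subseteq> V" "(\<lambda>_. 0) \<in> K"
    and K_add: "\<And>x y. x \<in> K \<Longrightarrow> y \<in> K \<Longrightarrow> (\<lambda>b. x b + y b) \<in> K"
    and K_scale: "\<And>x c. x \<in> K \<Longrightarrow> c \<ge> 0 \<Longrightarrow> (\<lambda>b. c * x b) \<in> K"
    and \<mu>: "linear_on V \<mu>" and \<mu>_le: "\<And>k. k \<in> K \<Longrightarrow> \<mu> k \<le> p k"
begin

text \<open>The infimal convolution of the seminorm \<open>p\<close> with \<open>-\<mu>\<close> restricted to the convex cone \<open>K\<close>.
  Hahn--Banach below it yields a functional dominated by \<open>p\<close> and by \<open>-\<mu>\<close> on \<open>K\<close>.\<close>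

definition cone_infconv :: "('b \<Rightarrow> real) \<Rightarrow> real" where
  "cone_infconv x = Inf ((\<lambda>k. p (\<lambda>b. x b - k b) - \<mu> k) ` K)"

lemma cone_subset: "k \<in> K \<Longrightarrow> k \<in> V"
  using K(1) by blast

lemma cone_infconv_le:
  assumes x: "x \<in> V" and k: "k \<in> K"
  shows "cone_infconv x \<le> p (\<lambda>b. x b - k b) - \<mu> k"
  unfolding cone_infconv_def
proof (rule cInf_lower)
  show "p (\<lambda>b. x b - k b) - \<mu> k \<in> (\<lambda>k. p (\<lambda>b. x b - k b) - \<mu> k) ` K" using k by (rule imageI)
  have lower: "- p x \<le> p (\<lambda>b. x b - k' b) - \<mu> k'" if k': "k' \<in> K" for k'
  proof -
    have "p k' \<le> p (\<lambda>b. k' b - x b) + p x"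
      using p_add[OF diff[OF cone_subset[OF k'] x] x] by simp
    moreover have "p (\<lambda>b. k' b - x b) = p (\<lambda>b. x b - k' b)"
      using p_scale[OF diff[OF x cone_subset[OF k']], of "-1"] by simp
    ultimately show ?thesis using \<mu>_le[OF k'] by linarith
  qed
  show "bdd_below ((\<lambda>k. p (\<lambda>b. x b - k b) - \<mu> k) ` K)"
  proof (rule bdd_belowI)
    fix z assume "z \<in> (\<lambda>k. p (\<lambda>b. x b - k b) - \<mu> k) ` K"
    then show "- p x \<le> z" using lower by blast
  qed
qed

lemma cone_infconv_greatest:
  assumes "\<And>k. k \<in> K \<Longrightarrow> z \<le> p (\<lambda>b. x b - k b) - \<mu> k"
  shows "z \<le> cone_infconv x"
  unfolding cone_infconv_def using assms K(2) by (intro cInf_greatest) (auto elim!: imageE)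

lemma cone_infconv_add:
  assumes xy: "x \<in> V" "y \<in> V"
  shows "cone_infconv (\<lambda>b. x b + y b) \<le> cone_infconv x + cone_infconv y"
proof -
  have "cone_infconv (\<lambda>b. x b + y b) \<le> (p (\<lambda>b. x b - k1 b) - \<mu> k1) + (p (\<lambda>b. y b - k2 b) - \<mu> k2)"
    if k: "k1 \<in> K" "k2 \<in> K" for k1 k2
  proof -
    have "cone_infconv (\<lambda>b. x b + y b) \<le> p (\<lambda>b. (x b - k1 b) + (y b - k2 b)) - \<mu> (\<lambda>b. k1 b + k2 b)"
      using cone_infconv_le[OF add[OF xy] K_add[OF k]] by (simp add: algebra_simps)
    also have "\<dots> \<le> (p (\<lambda>b. x b - k1 b) - \<mu> k1) + (p (\<lambda>b. y b - k2 b) - \<mu> k2)"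
      using p_add[OF diff[OF xy(1) cone_subset[OF k(1)]] diff[OF xy(2) cone_subset[OF k(2)]]]
        linear_on_add[OF \<mu> cone_subset[OF k(1)] cone_subset[OF k(2)]] by simp
    finally show ?thesis .
  qed
  then have "cone_infconv (\<lambda>b. x b + y b) - (p (\<lambda>b. y b - k2 b) - \<mu> k2) \<le> cone_infconv x"
    if "k2 \<in> K" for k2
    using that by (intro cone_infconv_greatest) (simp add: algebra_simps)
  then have "cone_infconv (\<lambda>b. x b + y b) - cone_infconv x \<le> cone_infconv y"
    by (intro cone_infconv_greatest) (simp add: algebra_simps)
  then show ?thesis by simp
qed

lemma cone_infconv_scale_le:
  assumes x: "x \<in> V" and c: "c > 0"
  shows "cone_infconv (\<lambda>b. c * x b) \<le> c * cone_infconv x"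
proof -
  have "cone_infconv (\<lambda>b. c * x b) / c \<le> p (\<lambda>b. x b - k b) - \<mu> k" if k: "k \<in> K" for k
  proof -
    have "cone_infconv (\<lambda>b. c * x b) \<le> p (\<lambda>b. c * (x b - k b)) - \<mu> (\<lambda>b. c * k b)"
      using cone_infconv_le[OF scale[OF x] K_scale[OF k, of c]] c by (simp add: algebra_simps)
    also have "\<dots> = c * (p (\<lambda>b. x b - k b) - \<mu> k)"
      using p_scale[OF diff[OF x cone_subset[OF k]], of c] linear_on_scale[OF \<mu> cone_subset[OF k], of c] c
      by (simp add: algebra_simps)
    finally show ?thesis using c by (simp add: pos_divide_le_eq mult.commute)
  qed
  then have "cone_infconv (\<lambda>b. c * x b) / c \<le> cone_infconv x" by (rule cone_infconv_greatest)
  then show ?thesis using c by (simp add: pos_divide_le_eq mult.commute)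
qed

lemma cone_infconv_scale:
  assumes x: "x \<in> V" and c: "c > 0"
  shows "cone_infconv (\<lambda>b. c * x b) = c * cone_infconv x"
proof -
  have "cone_infconv x \<le> (1 / c) * cone_infconv (\<lambda>b. c * x b)"
    using cone_infconv_scale_le[OF scale[OF x, of c], of "1 / c"] c by simp
  then show ?thesis using cone_infconv_scale_le[OF x c] c by (simp add: field_simps)
qed

theorem seminorm_cone_separation:
  "\<exists>h. linear_on V h \<and> (\<forall>x\<in>V. h x \<le> p x) \<and> (\<forall>k\<in>K. h k \<le> - \<mu> k)"
proof -
  obtain h where h: "linear_on V h" and h_le: "\<forall>x\<in>V. h x \<le> cone_infconv x"
    using Hahn_Banach[of cone_infconv, OF cone_infconv_add cone_infconv_scale] by blast
  have "h x \<le> p x" if x: "x \<in> V" for x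
  proof -
    have "h x \<le> cone_infconv x" using h_le x by blast
    also have "\<dots> \<le> p x - \<mu> (\<lambda>_. 0)" using cone_infconv_le[OF x K(2)] by simp
    finally show ?thesis using linear_on_zero[OF \<mu>] by simp
  qed
  moreover have "h k \<le> - \<mu> k" if k: "k \<in> K" for k
  proof -
    have "h k \<le> cone_infconv k" using h_le cone_subset[OF k] by blast
    also have "\<dots> \<le> p (\<lambda>_. 0) - \<mu> k" using cone_infconv_le[OF cone_subset[OF k] k] by simp
    finally show ?thesis using p_scale[OF zero, of 0] by simp
  qed
  ultimately show ?thesis using h by blast
qed

end

end

section \<open>Lipschitz functions and the free space\<close>

locale pointed_metric = Metric_space M d for M :: "'a set" and d :: "'a \<Rightarrow> 'a \<Rightarrow> real" +
  fixes p :: 'a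
  assumes base_in: "p \<in> M"
begin

abbreviation "L \<equiv> Lip0 M d p"
abbreviation "nrm f \<equiv> lipnorm M d f"
abbreviation "N \<phi> \<equiv> dnorm M d p \<phi>"
abbreviation "F \<equiv> FreeSp M d p"
abbreviation "B \<equiv> free_ball M d p"

lemma Lip0_outside [simp]: "f \<in> L \<Longrightarrow> x \<notin> M \<Longrightarrow> f x = 0"
  and Lip0_base [simp]: "f \<in> L \<Longrightarrow> f p = 0"
  by (simp_all add: Lip0_def)

lemma Lip0I:
  assumes "\<And>x. x \<notin> M \<Longrightarrow> f x = 0" "f p = 0"
    and "\<And>x y. x \<in> M \<Longrightarrow> y \<in> M \<Longrightarrow> \<bar>f x - f y\<bar> \<le> K * d x y"
  shows "f \<in> L"
  using assms unfolding Lip0_def by blast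

lemma lipnorm_slopes_bdd:
  assumes "f \<in> L"
  shows "bdd_above ({0} \<union> {\<bar>f x - f y\<bar> / d x y | x y. x \<in> M \<and> y \<in> M \<and> x \<noteq> y})"
proof -
  obtain K where K: "\<forall>x\<in>M. \<forall>y\<in>M. \<bar>f x - f y\<bar> \<le> K * d x y"
    using assms unfolding Lip0_def by blast
  have "\<bar>f x - f y\<bar> / d x y \<le> max 0 K" if "x \<in> M" "y \<in> M" "x \<noteq> y" for x y
  proof -
    have "\<bar>f x - f y\<bar> / d x y \<le> K" using K that mdist_pos_less[OF that(3,1,2)] by (simp add: divide_le_eq)
    then show ?thesis by simp
  qed
  then show ?thesis by (auto intro!: bdd_aboveI[where M="max 0 K"])
qed

lemma lipnorm_nonneg: "f \<in> L \<Longrightarrow> 0 \<le> nrm f"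
  unfolding lipnorm_def by (rule cSup_upper2[of 0, OF _ _ lipnorm_slopes_bdd]) auto

lemma slope_le_lipnorm:
  assumes "f \<in> L" "x \<in> M" "y \<in> M" "x \<noteq> y"
  shows "\<bar>f x - f y\<bar> / d x y \<le> nrm f"
  unfolding lipnorm_def using assms by (intro cSup_upper lipnorm_slopes_bdd) auto

lemma lipnorm_Lipschitz:
  assumes "f \<in> L" "x \<in> M" "y \<in> M"
  shows "\<bar>f x - f y\<bar> \<le> nrm f * d x y"
proof (cases "x = y")
  case True then show ?thesis using lipnorm_nonneg[OF assms(1)] by simp
next
  case False
  then show ?thesis
    using slope_le_lipnorm[OF assms False] mdist_pos_less[OF False assms(2,3)]
    by (simp add: divide_le_eq)
qed

lemma lipnorm_le:
  assumes "0 \<le> K" "\<And>x y. x \<in> M \<Longrightarrow> y \<in> M \<Longrightarrow> x \<noteq> y \<Longrightarrow> \<bar>f x - f y\<bar> \<le> K * d x y"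
  shows "nrm f \<le> K"
  unfolding lipnorm_def
proof (rule cSup_least)
  fix s assume "s \<in> {0} \<union> {\<bar>f x - f y\<bar> / d x y | x y. x \<in> M \<and> y \<in> M \<and> x \<noteq> y}"
  then consider "s = 0" | x y where "x \<in> M" "y \<in> M" "x \<noteq> y" "s = \<bar>f x - f y\<bar> / d x y"
    by blast
  then show "s \<le> K"
  proof cases
    case 1 then show ?thesis using assms(1) by simp
  next
    case (2 x y) then show ?thesis using assms(2)[of x y] mdist_pos_less[of x y] by (simp add: divide_le_eq)
  qed
qed simp

lemma Lip0_eq_zero_if_lipnorm_eq_0:
  assumes "f \<in> L" "nrm f = 0"
  shows "f = (\<lambda>_. 0)"
proof
  fix x show "f x = 0"
    using assms lipnorm_Lipschitz[OF assms(1) _ base_in, of x] by (cases "x \<in> M") auto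
qed

sublocale Lip: fun_subspace L
proof
  show "(\<lambda>_. 0) \<in> L" by (rule Lip0I[of _ 0]) simp_all
next
  fix f g assume f: "f \<in> L" and g: "g \<in> L"
  have "\<bar>(f x + g x) - (f y + g y)\<bar> \<le> (nrm f + nrm g) * d x y" if "x \<in> M" "y \<in> M" for x y
    using lipnorm_Lipschitz[OF f that] lipnorm_Lipschitz[OF g that]
      abs_triangle_ineq[of "f x - f y" "g x - g y"]
    by (simp add: algebra_simps)
  then show "(\<lambda>x. f x + g x) \<in> L" using f g by (intro Lip0I) simp_all
next
  fix f c assume f: "f \<in> L"
  have "\<bar>c * f x - c * f y\<bar> \<le> (\<bar>c\<bar> * nrm f) * d x y" if "x \<in> M" "y \<in> M" for x y
    using mult_left_mono[OF lipnorm_Lipschitz[OF f that], of "\<bar>c\<bar>"]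
    by (simp add: right_diff_distrib[symmetric] abs_mult mult.assoc)
  then show "(\<lambda>x. c * f x) \<in> L" using f by (intro Lip0I) simp_all
qed

lemma lipnorm_scale_le: "f \<in> L \<Longrightarrow> nrm (\<lambda>x. c * f x) \<le> \<bar>c\<bar> * nrm f"
  using lipnorm_nonneg lipnorm_Lipschitz
  by (intro lipnorm_le) (simp_all add: right_diff_distrib[symmetric] abs_mult mult.assoc mult_left_mono)

lemma delta_Lip0 [simp]: "f \<in> L \<Longrightarrow> delta M d p x f = f x"
  by (simp add: delta_def)

lemma delta_spanE:
  assumes "\<psi> \<in> delta_span M d p"
  obtains S a where "finite S" "S \<subseteq> M" "\<psi> = (\<lambda>f. \<Sum>x\<in>S. a x * delta M d p x f)"
  using assms unfolding delta_span_def by blast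

lemma delta_span_eval:
  assumes "\<psi> \<in> delta_span M d p"
  obtains S a where "finite S" "S \<subseteq> M" "\<And>f. f \<in> L \<Longrightarrow> \<psi> f = (\<Sum>x\<in>S. a x * f x)"
  using assms by (elim delta_spanE) simp

lemma linear_on_delta_span: "\<psi> \<in> delta_span M d p \<Longrightarrow> linear_on L \<psi>"
  by (elim delta_span_eval, rule linear_onI)
    (simp_all add: Lip.add Lip.scale distrib_left sum.distrib sum_distrib_left algebra_simps)

sublocale delta_span: fun_subspace "delta_span M d p"
proof
  show "(\<lambda>_. 0) \<in> delta_span M d p"
    unfolding delta_span_def by (intro CollectI exI[of _ "{}"]) auto
next
  fix \<psi>1 \<psi>2 assume "\<psi>1 \<in> delta_span M d p" "\<psi>2 \<in> delta_span M d p"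
  then obtain S1 a1 S2 a2 where 1: "finite S1" "S1 \<subseteq> M" "\<psi>1 = (\<lambda>f. \<Sum>x\<in>S1. a1 x * delta M d p x f)"
    and 2: "finite S2" "S2 \<subseteq> M" "\<psi>2 = (\<lambda>f. \<Sum>x\<in>S2. a2 x * delta M d p x f)"
    by (elim delta_spanE)
  define a where "a x = (if x \<in> S1 then a1 x else 0) + (if x \<in> S2 then a2 x else 0)" for x
  have "(\<Sum>x\<in>S1 \<union> S2. (if x \<in> S1 then a1 x else 0) * delta M d p x f) = (\<Sum>x\<in>S1. a1 x * delta M d p x f)"
    and "(\<Sum>x\<in>S1 \<union> S2. (if x \<in> S2 then a2 x else 0) * delta M d p x f) = (\<Sum>x\<in>S2. a2 x * delta M d p x f)"
    for f by (rule sum.mono_neutral_cong_right; use 1(1) 2(1) in auto)+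
  then have "(\<lambda>f. \<psi>1 f + \<psi>2 f) = (\<lambda>f. \<Sum>x\<in>S1 \<union> S2. a x * delta M d p x f)"
    unfolding 1(3) 2(3) a_def distrib_right sum.distrib by simp
  then show "(\<lambda>f. \<psi>1 f + \<psi>2 f) \<in> delta_span M d p"
    unfolding delta_span_def using 1(1,2) 2(1,2) by (intro CollectI exI[of _ "S1 \<union> S2"] exI[of _ a]) simp
next
  fix \<psi> c assume "\<psi> \<in> delta_span M d p"
  then obtain S a where S: "finite S" "S \<subseteq> M" "\<psi> = (\<lambda>f. \<Sum>x\<in>S. a x * delta M d p x f)"
    by (elim delta_spanE)
  then have "(\<lambda>f. c * \<psi> f) = (\<lambda>f. \<Sum>x\<in>S. (c * a x) * delta M d p x f)"
    by (simp add: sum_distrib_left mult.assoc)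
  then show "(\<lambda>f. c * \<psi> f) \<in> delta_span M d p"
    unfolding delta_span_def using S(1,2) by (intro CollectI exI[of _ S] exI[of _ "\<lambda>x. c * a x"]) simp
qed

lemma FreeSp_approx: "\<phi> \<in> F \<Longrightarrow> e > 0 \<Longrightarrow> \<exists>\<psi>\<in>delta_span M d p. \<forall>f\<in>L. \<bar>\<phi> f - \<psi> f\<bar> \<le> e * nrm f"
  and FreeSp_outside: "\<phi> \<in> F \<Longrightarrow> g \<notin> L \<Longrightarrow> \<phi> g = 0"
  by (simp_all add: FreeSp_def)

lemma FreeSpI:
  assumes "\<And>g. g \<notin> L \<Longrightarrow> \<phi> g = 0"
    and "\<And>e. e > 0 \<Longrightarrow> \<exists>\<psi>\<in>delta_span M d p. \<forall>f\<in>L. \<bar>\<phi> f - \<psi> f\<bar> \<le> e * nrm f"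
  shows "\<phi> \<in> F"
  using assms unfolding FreeSp_def by blast

lemma delta_span_subset_FreeSp: "delta_span M d p \<subseteq> F"
proof
  fix \<psi> assume \<psi>: "\<psi> \<in> delta_span M d p"
  show "\<psi> \<in> F"
  proof (rule FreeSpI)
    show "\<psi> g = 0" if "g \<notin> L" for g using \<psi> that by (elim delta_spanE) (simp add: delta_def)
    show "\<exists>\<psi>'\<in>delta_span M d p. \<forall>f\<in>L. \<bar>\<psi> f - \<psi>' f\<bar> \<le> e * nrm f" if "e > 0" for e
      using \<psi> that lipnorm_nonneg by (intro bexI[of _ \<psi>]) auto
  qed
qed

text \<open>Linearity passes to uniform limits of finite combinations of evaluations.\<close>

lemma linear_on_FreeSp:
  assumes \<phi>: "\<phi> \<in> F"
  shows "linear_on L \<phi>"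
proof -
  have approx: "\<bar>\<phi> f - \<psi> f\<bar> \<le> e * nrm f" if "\<forall>f\<in>L. \<bar>\<phi> f - \<psi> f\<bar> \<le> e * nrm f" "f \<in> L" for \<psi> e f
    using that by blast
  show ?thesis
  proof (rule linear_onI)
    fix f g assume f: "f \<in> L" and g: "g \<in> L"
    let ?K = "nrm (\<lambda>x. f x + g x) + nrm f + nrm g"
    have "\<bar>\<phi> (\<lambda>x. f x + g x) - (\<phi> f + \<phi> g)\<bar> \<le> 0 + e * ?K" if e: "e > 0" for e
    proof -
      obtain \<psi> where \<psi>: "\<psi> \<in> delta_span M d p" "\<forall>f\<in>L. \<bar>\<phi> f - \<psi> f\<bar> \<le> e * nrm f"
        using FreeSp_approx[OF \<phi> e] by blast
      have "\<psi> (\<lambda>x. f x + g x) = \<psi> f + \<psi> g" by (rule linear_on_add[OF linear_on_delta_span[OF \<psi>(1)] f g])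
      then show ?thesis
        using approx[OF \<psi>(2) Lip.add[OF f g]] approx[OF \<psi>(2) f] approx[OF \<psi>(2) g]
        by (simp add: algebra_simps abs_le_iff)
    qed
    moreover have "0 \<le> ?K"
      using lipnorm_nonneg[OF Lip.add[OF f g]] lipnorm_nonneg[OF f] lipnorm_nonneg[OF g] by linarith
    ultimately have "\<bar>\<phi> (\<lambda>x. f x + g x) - (\<phi> f + \<phi> g)\<bar> \<le> 0"
      by (rule le_if_le_plus_eps_mult)
    then show "\<phi> (\<lambda>x. f x + g x) = \<phi> f + \<phi> g" by simp
  next
    fix f c assume f: "f \<in> L"
    let ?K = "nrm (\<lambda>x. c * f x) + \<bar>c\<bar> * nrm f"
    have "\<bar>\<phi> (\<lambda>x. c * f x) - c * \<phi> f\<bar> \<le> 0 + e * ?K" if e: "e > 0" for e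
    proof -
      obtain \<psi> where \<psi>: "\<psi> \<in> delta_span M d p" "\<forall>f\<in>L. \<bar>\<phi> f - \<psi> f\<bar> \<le> e * nrm f"
        using FreeSp_approx[OF \<phi> e] by blast
      have "\<psi> (\<lambda>x. c * f x) = c * \<psi> f" by (rule linear_on_scale[OF linear_on_delta_span[OF \<psi>(1)] f])
      moreover have "\<bar>c * (\<phi> f - \<psi> f)\<bar> \<le> \<bar>c\<bar> * (e * nrm f)"
        unfolding abs_mult by (rule mult_left_mono[OF approx[OF \<psi>(2) f]]) simp
      ultimately show ?thesis
        using approx[OF \<psi>(2) Lip.scale[OF f, of c]] by (simp add: algebra_simps abs_le_iff; linarith)
    qed
    moreover have "0 \<le> ?K" using lipnorm_nonneg[OF Lip.scale[OF f]] lipnorm_nonneg[OF f] by simp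
    ultimately have "\<bar>\<phi> (\<lambda>x. c * f x) - c * \<phi> f\<bar> \<le> 0"
      by (rule le_if_le_plus_eps_mult)
    then show "\<phi> (\<lambda>x. c * f x) = c * \<phi> f" by simp
  qed
qed

lemma FreeSp_bounded:
  assumes "\<phi> \<in> F"
  obtains C where "\<And>g. g \<in> L \<Longrightarrow> \<bar>\<phi> g\<bar> \<le> C * nrm g"
proof -
  obtain \<psi> where \<psi>: "\<psi> \<in> delta_span M d p" "\<forall>f\<in>L. \<bar>\<phi> f - \<psi> f\<bar> \<le> 1 * nrm f"
    using FreeSp_approx[OF assms, of 1] by auto
  obtain S a where S: "finite S" "S \<subseteq> M" "\<And>f. f \<in> L \<Longrightarrow> \<psi> f = (\<Sum>x\<in>S. a x * f x)"
    using delta_span_eval[OF \<psi>(1)] by blast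
  have "\<bar>\<phi> g\<bar> \<le> (1 + (\<Sum>x\<in>S. \<bar>a x\<bar> * d x p)) * nrm g" if g: "g \<in> L" for g
  proof -
    have "\<bar>\<psi> g\<bar> \<le> (\<Sum>x\<in>S. \<bar>a x * g x\<bar>)" using S(3)[OF g] by (simp add: sum_abs)
    also have "\<dots> \<le> (\<Sum>x\<in>S. \<bar>a x\<bar> * d x p * nrm g)"
    proof (rule sum_mono)
      fix x assume "x \<in> S"
      then have "\<bar>g x\<bar> \<le> nrm g * d x p" using lipnorm_Lipschitz[OF g _ base_in, of x] S(2) g by auto
      then have "\<bar>a x\<bar> * \<bar>g x\<bar> \<le> \<bar>a x\<bar> * (nrm g * d x p)" by (rule mult_left_mono) simp
      then show "\<bar>a x * g x\<bar> \<le> \<bar>a x\<bar> * d x p * nrm g" by (simp add: abs_mult algebra_simps)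
    qed
    also have "\<dots> = (\<Sum>x\<in>S. \<bar>a x\<bar> * d x p) * nrm g" by (simp add: sum_distrib_right)
    finally have "\<bar>\<psi> g\<bar> \<le> (\<Sum>x\<in>S. \<bar>a x\<bar> * d x p) * nrm g" .
    moreover have "\<bar>\<phi> g - \<psi> g\<bar> \<le> nrm g" using \<psi>(2) g by simp
    ultimately show ?thesis by (simp add: algebra_simps abs_le_iff)
  qed
  then show ?thesis using that by blast
qed

sublocale free: fun_subspace F
proof
  show "(\<lambda>_. 0) \<in> F" using delta_span.zero delta_span_subset_FreeSp by blast
next
  fix \<phi>1 \<phi>2 assume \<phi>: "\<phi>1 \<in> F" "\<phi>2 \<in> F"
  show "(\<lambda>f. \<phi>1 f + \<phi>2 f) \<in> F"
  proof (rule FreeSpI)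
    show "\<phi>1 g + \<phi>2 g = 0" if "g \<notin> L" for g
      using FreeSp_outside[OF \<phi>(1) that] FreeSp_outside[OF \<phi>(2) that] by simp
  next
    fix e :: real assume "e > 0"
    then obtain \<psi>1 \<psi>2 where \<psi>: "\<psi>1 \<in> delta_span M d p" "\<psi>2 \<in> delta_span M d p"
      "\<forall>f\<in>L. \<bar>\<phi>1 f - \<psi>1 f\<bar> \<le> e/2 * nrm f" "\<forall>f\<in>L. \<bar>\<phi>2 f - \<psi>2 f\<bar> \<le> e/2 * nrm f"
      using FreeSp_approx[OF \<phi>(1), of "e/2"] FreeSp_approx[OF \<phi>(2), of "e/2"] by auto
    have "\<bar>\<phi>1 f + \<phi>2 f - (\<psi>1 f + \<psi>2 f)\<bar> \<le> e * nrm f" if f: "f \<in> L" for f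
    proof -
      have "\<bar>\<phi>1 f - \<psi>1 f\<bar> \<le> (e * nrm f) / 2" "\<bar>\<phi>2 f - \<psi>2 f\<bar> \<le> (e * nrm f) / 2"
        using \<psi>(3,4) f by simp_all
      then show ?thesis by (simp only: abs_le_iff) linarith
    qed
    then show "\<exists>\<psi>\<in>delta_span M d p. \<forall>f\<in>L. \<bar>\<phi>1 f + \<phi>2 f - \<psi> f\<bar> \<le> e * nrm f"
      using delta_span.add[OF \<psi>(1,2)] by force
  qed
next
  fix \<phi> c assume \<phi>: "\<phi> \<in> F"
  show "(\<lambda>f. c * \<phi> f) \<in> F"
  proof (rule FreeSpI)
    show "c * \<phi> g = 0" if "g \<notin> L" for g using FreeSp_outside[OF \<phi> that] by simp
  next
    fix e :: real assume "e > 0"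
    then obtain \<psi> where \<psi>: "\<psi> \<in> delta_span M d p" "\<forall>f\<in>L. \<bar>\<phi> f - \<psi> f\<bar> \<le> e / (\<bar>c\<bar> + 1) * nrm f"
      using FreeSp_approx[OF \<phi>, of "e / (\<bar>c\<bar> + 1)"] by auto
    have "\<bar>c * \<phi> f - c * \<psi> f\<bar> \<le> e * nrm f" if f: "f \<in> L" for f
    proof -
      have "\<bar>c * \<phi> f - c * \<psi> f\<bar> = \<bar>c\<bar> * \<bar>\<phi> f - \<psi> f\<bar>" by (simp add: right_diff_distrib[symmetric] abs_mult)
      also have "\<dots> \<le> \<bar>c\<bar> * (e / (\<bar>c\<bar> + 1) * nrm f)"
        using \<psi>(2) f by (intro mult_left_mono) simp_all
      also have "\<dots> \<le> e * nrm f"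
        using \<open>e > 0\<close> lipnorm_nonneg[OF f] by (simp add: field_simps mult_right_mono)
      finally show ?thesis .
    qed
    then show "\<exists>\<psi>\<in>delta_span M d p. \<forall>f\<in>L. \<bar>c * \<phi> f - \<psi> f\<bar> \<le> e * nrm f"
      using delta_span.scale[OF \<psi>(1)] by force
  qed
qed

lemma dnorm_set_bdd:
  assumes "\<phi> \<in> F"
  shows "bdd_above ({0} \<union> {\<bar>\<phi> f\<bar> | f. f \<in> L \<and> nrm f \<le> 1})"
proof -
  obtain C where C: "\<And>g. g \<in> L \<Longrightarrow> \<bar>\<phi> g\<bar> \<le> C * nrm g" using FreeSp_bounded[OF assms] by blast
  have "\<bar>\<phi> f\<bar> \<le> \<bar>C\<bar>" if f: "f \<in> L" "nrm f \<le> 1" for f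
  proof -
    have "C * nrm f \<le> \<bar>C\<bar> * nrm f" by (rule mult_right_mono) (simp_all add: lipnorm_nonneg f)
    also have "\<dots> \<le> \<bar>C\<bar>" using f(2) by (simp add: mult_left_le)
    finally show ?thesis using C[OF f(1)] by linarith
  qed
  then show ?thesis by (intro bdd_aboveI[where M="\<bar>C\<bar>"]) auto
qed

lemma dnorm_nonneg: "\<phi> \<in> F \<Longrightarrow> 0 \<le> N \<phi>"
  unfolding dnorm_def by (rule cSup_upper2[of 0, OF _ _ dnorm_set_bdd]) auto

lemma abs_eval_le_dnorm: "\<phi> \<in> F \<Longrightarrow> f \<in> L \<Longrightarrow> nrm f \<le> 1 \<Longrightarrow> \<bar>\<phi> f\<bar> \<le> N \<phi>"
  unfolding dnorm_def by (rule cSup_upper[OF _ dnorm_set_bdd]) auto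

lemma dnorm_le:
  assumes "0 \<le> K" "\<And>f. f \<in> L \<Longrightarrow> \<bar>\<phi> f\<bar> \<le> K * nrm f"
  shows "N \<phi> \<le> K"
  unfolding dnorm_def
proof (rule cSup_least)
  fix s assume "s \<in> {0} \<union> {\<bar>\<phi> f\<bar> | f. f \<in> L \<and> nrm f \<le> 1}"
  then consider "s = 0" | f where "f \<in> L" "nrm f \<le> 1" "s = \<bar>\<phi> f\<bar>" by blast
  then show "s \<le> K"
  proof cases
    case (2 f)
    have "K * nrm f \<le> K" using 2 assms(1) by (simp add: mult_left_le)
    then show ?thesis using assms(2)[OF 2(1)] 2(3) by linarith
  qed (use assms(1) in simp)
qed simp

lemma abs_eval_le_dnorm_lipnorm:
  assumes "\<phi> \<in> F" "f \<in> L"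
  shows "\<bar>\<phi> f\<bar> \<le> N \<phi> * nrm f"
proof (cases "nrm f = 0")
  case True
  then show ?thesis
    using Lip0_eq_zero_if_lipnorm_eq_0[OF assms(2)] Lip.linear_on_zero[OF linear_on_FreeSp[OF assms(1)]] by simp
next
  case False
  then have pos: "nrm f > 0" using lipnorm_nonneg[OF assms(2)] by simp
  have "nrm (\<lambda>x. (1 / nrm f) * f x) \<le> 1"
    using lipnorm_scale_le[OF assms(2), of "1 / nrm f"] pos by simp
  then have "\<bar>\<phi> (\<lambda>x. (1 / nrm f) * f x)\<bar> \<le> N \<phi>"
    by (rule abs_eval_le_dnorm[OF assms(1) Lip.scale[OF assms(2)]])
  then show ?thesis
    using linear_on_scale[OF linear_on_FreeSp[OF assms(1)] assms(2), of "1 / nrm f"] pos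
    by (simp add: abs_mult divide_le_eq)
qed

lemma dnorm_add:
  assumes "\<phi> \<in> F" "\<psi> \<in> F"
  shows "N (\<lambda>f. \<phi> f + \<psi> f) \<le> N \<phi> + N \<psi>"
proof (rule dnorm_le)
  show "0 \<le> N \<phi> + N \<psi>" using dnorm_nonneg assms by (simp add: add_nonneg_nonneg)
  fix f assume "f \<in> L"
  then show "\<bar>\<phi> f + \<psi> f\<bar> \<le> (N \<phi> + N \<psi>) * nrm f"
    using abs_eval_le_dnorm_lipnorm[OF assms(1)] abs_eval_le_dnorm_lipnorm[OF assms(2)]
      abs_triangle_ineq[of "\<phi> f" "\<psi> f"]
    by (simp add: distrib_right) (smt (verit))
qed

lemma dnorm_scale:
  assumes "\<phi> \<in> F"
  shows "N (\<lambda>f. c * \<phi> f) = \<bar>c\<bar> * N \<phi>"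
proof -
  have le: "N (\<lambda>f. c * \<phi> f) \<le> \<bar>c\<bar> * N \<phi>" if "\<phi> \<in> F" for c \<phi>
    using dnorm_nonneg[OF that] abs_eval_le_dnorm_lipnorm[OF that]
    by (intro dnorm_le) (simp_all add: abs_mult mult.assoc mult_left_mono)
  show ?thesis
  proof (cases "c = 0")
    case True
    then show ?thesis using le[OF assms, of 0] dnorm_nonneg[OF free.scale[OF assms, of 0]] by simp
  next
    case False
    have "N \<phi> \<le> \<bar>1 / c\<bar> * N (\<lambda>f. c * \<phi> f)"
      using le[OF free.scale[OF assms, of c], of "1 / c"] False by simp
    then show ?thesis using le[OF assms, of c] False by (simp add: field_simps)
  qed
qed

lemma dnorm_zero: "N (\<lambda>_. 0) = 0"
  using dnorm_scale[OF free.zero, of 0] by simp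

lemma dnorm_diff_commute:
  assumes "\<phi> \<in> F" "\<psi> \<in> F"
  shows "N (\<lambda>f. \<phi> f - \<psi> f) = N (\<lambda>f. \<psi> f - \<phi> f)"
  using dnorm_scale[OF free.diff[OF assms], of "-1"] by simp

lemma dnorm_triangle:
  assumes "\<phi> \<in> F" "\<psi> \<in> F" "\<rho> \<in> F"
  shows "N (\<lambda>f. \<phi> f - \<rho> f) \<le> N (\<lambda>f. \<phi> f - \<psi> f) + N (\<lambda>f. \<psi> f - \<rho> f)"
  using dnorm_add[OF free.diff[OF assms(1,2)] free.diff[OF assms(2,3)]] by simp

lemma free_ball_iff: "\<phi> \<in> B \<longleftrightarrow> \<phi> \<in> F \<and> N \<phi> \<le> 1"
  by (simp add: free_ball_def)

lemma zero_in_free_ball: "(\<lambda>_. 0) \<in> B"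
  by (simp add: free_ball_iff free.zero dnorm_zero)

lemma abs_eval_free_ball_le:
  assumes "\<phi> \<in> B" "f \<in> L"
  shows "\<bar>\<phi> f\<bar> \<le> nrm f"
proof -
  have "\<bar>\<phi> f\<bar> \<le> N \<phi> * nrm f" using assms by (simp add: free_ball_iff abs_eval_le_dnorm_lipnorm)
  also have "\<dots> \<le> 1 * nrm f" using assms lipnorm_nonneg by (intro mult_right_mono) (simp_all add: free_ball_iff)
  finally show ?thesis by simp
qed

lemma fconvex_free_ball: "fconvex B"
  unfolding fconvex_def
proof (intro ballI allI impI)
  fix \<phi> \<psi> and t :: real assume "\<phi> \<in> B" "\<psi> \<in> B" and t: "0 \<le> t \<and> t \<le> 1"
  then have \<phi>: "\<phi> \<in> F" "N \<phi> \<le> 1" and \<psi>: "\<psi> \<in> F" "N \<psi> \<le> 1" by (simp_all add: free_ball_iff)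
  have "N (\<lambda>f. t * \<phi> f + (1 - t) * \<psi> f) \<le> N (\<lambda>f. t * \<phi> f) + N (\<lambda>f. (1 - t) * \<psi> f)"
    using dnorm_add[OF free.scale[OF \<phi>(1)] free.scale[OF \<psi>(1)]] .
  also have "\<dots> = t * N \<phi> + (1 - t) * N \<psi>" using t by (simp add: dnorm_scale \<phi>(1) \<psi>(1))
  also have "\<dots> \<le> t * 1 + (1 - t) * 1" using t \<phi>(2) \<psi>(2) by (intro add_mono mult_left_mono) auto
  finally show "(\<lambda>f. t * \<phi> f + (1 - t) * \<psi> f) \<in> B"
    using free.add[OF free.scale[OF \<phi>(1)] free.scale[OF \<psi>(1)]] by (simp add: free_ball_iff)
qed

lemma delta_in_FreeSp: "x \<in> M \<Longrightarrow> delta M d p x \<in> F"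
  using delta_span_subset_FreeSp unfolding delta_span_def
  by (force intro!: exI[of _ "{x}"] exI[of _ "\<lambda>_. 1"])

lemma dnorm_delta_diff_le:
  assumes "x \<in> M" "y \<in> M"
  shows "N (\<lambda>f. delta M d p x f - delta M d p y f) \<le> d x y"
  using lipnorm_Lipschitz[OF _ assms] by (intro dnorm_le) (simp_all add: mult.commute)

lemma molecule_eval: "f \<in> L \<Longrightarrow> molecule M d p x y f = (f x - f y) / d x y"
  by (simp add: molecule_def)

lemma molecule_in_free_ball:
  assumes "x \<in> M" "y \<in> M" "x \<noteq> y"
  shows "molecule M d p x y \<in> B"
proof -
  have mol: "molecule M d p x y = (\<lambda>f. (1 / d x y) * (delta M d p x f - delta M d p y f))"
    by (simp add: molecule_def fun_eq_iff)
  have \<delta>: "(\<lambda>f. delta M d p x f - delta M d p y f) \<in> F"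
    using free.diff delta_in_FreeSp assms(1,2) by blast
  have pos: "0 < d x y" using mdist_pos_less[OF assms(3,1,2)] .
  have "N (molecule M d p x y) \<le> 1"
    unfolding mol dnorm_scale[OF \<delta>] using dnorm_delta_diff_le[OF assms(1,2)] pos by simp
  then show ?thesis unfolding free_ball_iff mol using free.scale[OF \<delta>, of "1 / d x y"] by simp
qed

section \<open>Norm-attaining functions and molecules\<close>

lemma Lip_SNA_subset_NA_free: "Lip_SNA M d p \<subseteq> NA_free M d p"
proof
  fix f assume "f \<in> Lip_SNA M d p"
  then obtain x y where f: "f \<in> L" and xy: "x \<in> M" "y \<in> M" "x \<noteq> y" "\<bar>f x - f y\<bar> = nrm f * d x y"
    unfolding Lip_SNA_def by blast
  have "\<bar>molecule M d p x y f\<bar> = nrm f"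
    using molecule_eval[OF f] xy mdist_pos_less[OF xy(3,1,2)] by simp
  then show "f \<in> NA_free M d p" unfolding NA_free_def using f molecule_in_free_ball[OF xy(1-3)] by blast
qed

definition norming_set :: "('a \<Rightarrow> real) \<Rightarrow> 'a functional set" where
  "norming_set f = {\<phi> \<in> B. \<phi> f = nrm f}"

lemma norming_set_nonempty:
  assumes "f \<in> NA_free M d p"
  shows "norming_set f \<noteq> {}"
proof -
  obtain \<phi> where f: "f \<in> L" and \<phi>: "\<phi> \<in> B" "\<bar>\<phi> f\<bar> = nrm f"
    using assms unfolding NA_free_def by blast
  have "(\<lambda>g. - \<phi> g) \<in> B"
    using \<phi>(1) free.scale[of \<phi> "-1"] dnorm_scale[of \<phi> "-1"] by (simp add: free_ball_iff)
  then have "\<phi> \<in> norming_set f \<or> (\<lambda>g. - \<phi> g) \<in> norming_set f"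
    using \<phi> unfolding norming_set_def by (cases "\<phi> f \<ge> 0") auto
  then show ?thesis by blast
qed

lemma fconvex_norming_set: "fconvex (norming_set f)"
  using fconvex_free_ball unfolding fconvex_def norming_set_def by (simp add: algebra_simps)

lemma norming_set_closed:
  assumes f: "f \<in> L" and \<phi>: "\<phi> \<in> F"
    and approx: "\<And>\<epsilon>. \<epsilon> > 0 \<Longrightarrow> \<exists>\<psi>\<in>norming_set f. N (\<lambda>g. \<phi> g - \<psi> g) < \<epsilon>"
  shows "\<phi> \<in> norming_set f"
proof -
  have bounds: "N \<phi> \<le> 1 + \<epsilon>" "\<bar>\<phi> f - nrm f\<bar> \<le> 0 + \<epsilon> * nrm f" if \<epsilon>: "\<epsilon> > 0" for \<epsilon>
  proof -
    obtain \<psi> where \<psi>: "\<psi> \<in> B" "\<psi> f = nrm f" and close: "N (\<lambda>g. \<phi> g - \<psi> g) < \<epsilon>"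
      using approx[OF \<epsilon>] unfolding norming_set_def by blast
    have \<psi>F: "\<psi> \<in> F" "N \<psi> \<le> 1" using \<psi>(1) by (simp_all add: free_ball_iff)
    have "N \<phi> \<le> N (\<lambda>g. \<phi> g - \<psi> g) + N \<psi>"
      using dnorm_add[OF free.diff[OF \<phi> \<psi>F(1)] \<psi>F(1)] by simp
    then show "N \<phi> \<le> 1 + \<epsilon>" using close \<psi>F(2) by linarith
    have "\<bar>\<phi> f - \<psi> f\<bar> \<le> N (\<lambda>g. \<phi> g - \<psi> g) * nrm f"
      using abs_eval_le_dnorm_lipnorm[OF free.diff[OF \<phi> \<psi>F(1)] f] by simp
    also have "\<dots> \<le> \<epsilon> * nrm f" using close lipnorm_nonneg[OF f] by (simp add: mult_right_mono)
    finally show "\<bar>\<phi> f - nrm f\<bar> \<le> 0 + \<epsilon> * nrm f" using \<psi>(2) by simp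
  qed
  have "N \<phi> \<le> 1" using bounds(1) by (rule field_le_epsilon)
  moreover have "\<bar>\<phi> f - nrm f\<bar> \<le> 0" using bounds(2) lipnorm_nonneg[OF f] by (rule le_if_le_plus_eps_mult)
  ultimately show ?thesis using \<phi> by (simp add: norming_set_def free_ball_iff)
qed

text \<open>The norming set is a face of the ball.\<close>

lemma fextreme_point_free_ball_if_norming_set:
  assumes f: "f \<in> L" and e: "fextreme_point (norming_set f) e"
  shows "fextreme_point B e"
  unfolding fextreme_point_def
proof (intro conjI ballI allI impI)
  show "e \<in> B" using e by (simp add: fextreme_point_def norming_set_def)
  fix \<phi> \<psi> and t :: real
  assume \<phi>\<psi>: "\<phi> \<in> B" "\<psi> \<in> B" and t: "0 < t \<and> t < 1 \<and> e = (\<lambda>f. t * \<phi> f + (1 - t) * \<psi> f)"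
  have le: "\<phi> f \<le> nrm f" "\<psi> f \<le> nrm f"
    using abs_eval_free_ball_le[OF _ f] \<phi>\<psi> abs_le_iff by blast+
  have "e f = nrm f" using e by (simp add: fextreme_point_def norming_set_def)
  then have "t * (nrm f - \<phi> f) + (1 - t) * (nrm f - \<psi> f) = 0" using t by (simp add: algebra_simps)
  moreover have "0 \<le> t * (nrm f - \<phi> f)" "0 \<le> (1 - t) * (nrm f - \<psi> f)" using le t by simp_all
  ultimately have "t * (nrm f - \<phi> f) = 0" "(1 - t) * (nrm f - \<psi> f) = 0" by linarith+
  then have "\<phi> f = nrm f" "\<psi> f = nrm f" using t by simp_all
  then have "\<phi> \<in> norming_set f" "\<psi> \<in> norming_set f" using \<phi>\<psi> by (simp_all add: norming_set_def)
  then show "\<phi> = \<psi>" using e t unfolding fextreme_point_def by blast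
qed

lemma NA_free_subset_Lip_SNA:
  assumes KMP: "free_KMP M d p"
    and extreme_molecule: "\<forall>e. fextreme_point B e \<longrightarrow> (\<exists>x\<in>M. \<exists>y\<in>M. x \<noteq> y \<and> e = molecule M d p x y)"
  shows "NA_free M d p \<subseteq> Lip_SNA M d p"
proof
  fix f assume NA: "f \<in> NA_free M d p"
  then have f: "f \<in> L" by (simp add: NA_free_def)
  have "norming_set f \<subseteq> F" "\<exists>R. \<forall>\<phi>\<in>norming_set f. N \<phi> \<le> R"
    by (auto simp: norming_set_def free_ball_iff)
  then obtain e where "fextreme_point (norming_set f) e"
    using KMP norming_set_nonempty[OF NA] fconvex_norming_set norming_set_closed[OF f]
    unfolding free_KMP_def by blast
  moreover from this obtain x y where xy: "x \<in> M" "y \<in> M" "x \<noteq> y" "e = molecule M d p x y"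
    using extreme_molecule fextreme_point_free_ball_if_norming_set[OF f] by blast
  ultimately have "(f x - f y) / d x y = nrm f"
    using molecule_eval[OF f] by (simp add: fextreme_point_def norming_set_def)
  then have "\<bar>f x - f y\<bar> = nrm f * d x y"
    using mdist_pos_less[OF xy(3,1,2)] lipnorm_nonneg[OF f] by (simp add: divide_eq_eq)
  then show "f \<in> Lip_SNA M d p" unfolding Lip_SNA_def using f xy by blast
qed

section \<open>The Bishop--Phelps theorem\<close>

lemma FreeSp_uniform_limit:
  assumes s: "\<And>n. s n \<in> F" and r: "r \<longlonglongrightarrow> 0" and outside: "\<And>g. g \<notin> L \<Longrightarrow> \<phi> g = 0"
    and close: "\<And>n g. g \<in> L \<Longrightarrow> \<bar>\<phi> g - s n g\<bar> \<le> r n * nrm g"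
  shows "\<phi> \<in> F"
proof (rule FreeSpI[OF outside])
  fix e :: real assume "e > 0"
  then obtain n where n: "r n < e / 2"
    using order_tendstoD(2)[OF r, of "e/2"] by (auto simp: eventually_sequentially)
  obtain \<psi> where \<psi>: "\<psi> \<in> delta_span M d p" "\<forall>g\<in>L. \<bar>s n g - \<psi> g\<bar> \<le> e / 2 * nrm g"
    using FreeSp_approx[OF s[of n], of "e/2"] \<open>e > 0\<close> by auto
  have "\<bar>\<phi> g - \<psi> g\<bar> \<le> e * nrm g" if g: "g \<in> L" for g
  proof -
    have "r n * nrm g \<le> e / 2 * nrm g" using n lipnorm_nonneg[OF g] by (intro mult_right_mono) simp_all
    then have "\<bar>\<phi> g - s n g\<bar> \<le> (e * nrm g) / 2" using close[OF g, of n] by simp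
    moreover have "\<bar>s n g - \<psi> g\<bar> \<le> (e * nrm g) / 2" using \<psi>(2) g by simp
    ultimately show ?thesis by (simp only: abs_le_iff) linarith
  qed
  then show "\<exists>\<psi>\<in>delta_span M d p. \<forall>g\<in>L. \<bar>\<phi> g - \<psi> g\<bar> \<le> e * nrm g" using \<psi>(1) by blast
qed

lemma FreeSp_Cauchy_limit:
  assumes s: "\<And>n. s n \<in> F" and bound: "\<And>m n. n \<le> m \<Longrightarrow> N (\<lambda>g. s m g - s n g) \<le> r n"
    and r: "r \<longlonglongrightarrow> 0"
  obtains \<phi> where "\<phi> \<in> F" "\<And>n. N (\<lambda>g. \<phi> g - s n g) \<le> r n"
proof -
  have r_nonneg: "0 \<le> r n" for n using bound[of n n] dnorm_zero by simp
  have pointwise: "\<bar>s m g - s n g\<bar> \<le> r n * nrm g" if "n \<le> m" "g \<in> L" for m n g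
    using abs_eval_le_dnorm_lipnorm[OF free.diff[OF s s] that(2), of m n]
      mult_right_mono[OF bound[OF that(1)] lipnorm_nonneg[OF that(2)]] by simp
  have cauchy: "Cauchy (\<lambda>m. s m g)" if g: "g \<in> L" for g
  proof (rule CauchyI)
    fix e :: real assume "0 < e"
    then have "e / (2 * (nrm g + 1)) > 0" using lipnorm_nonneg[OF g] by simp
    then obtain n where n: "r n < e / (2 * (nrm g + 1))"
      using order_tendstoD(2)[OF r] by (auto simp: eventually_sequentially)
    have "2 * (r n * nrm g) \<le> 2 * (r n * (nrm g + 1))"
      using r_nonneg[of n] by (simp add: mult_left_mono)
    also have "\<dots> < e" using n lipnorm_nonneg[OF g] by (simp add: field_simps)
    finally have small: "2 * (r n * nrm g) < e" .
    show "\<exists>M. \<forall>m\<ge>M. \<forall>k\<ge>M. norm (s m g - s k g) < e"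
    proof (intro exI allI impI)
      fix m k assume "n \<le> m" "n \<le> k"
      then show "norm (s m g - s k g) < e"
        using pointwise[of n m g] pointwise[of n k g] g small by (simp add: abs_le_iff abs_less_iff)
    qed
  qed
  define \<phi> where "\<phi> g = (if g \<in> L then lim (\<lambda>m. s m g) else 0)" for g
  have lim: "(\<lambda>m. s m g) \<longlonglongrightarrow> \<phi> g" if "g \<in> L" for g
    using cauchy[OF that] that by (simp add: \<phi>_def Cauchy_convergent_iff convergent_LIMSEQ_iff)
  have close: "\<bar>\<phi> g - s n g\<bar> \<le> r n * nrm g" if g: "g \<in> L" for g n
  proof (rule LIMSEQ_le_const2)
    show "(\<lambda>m. \<bar>s m g - s n g\<bar>) \<longlonglongrightarrow> \<bar>\<phi> g - s n g\<bar>"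
      using tendsto_rabs[OF tendsto_diff[OF lim[OF g] tendsto_const[of "s n g"]]] .
  qed (use pointwise g in blast)
  have "\<phi> \<in> F"
  proof (rule FreeSp_uniform_limit[OF s r])
    show "\<phi> g = 0" if "g \<notin> L" for g using that by (simp add: \<phi>_def)
  qed (rule close)
  moreover have "N (\<lambda>g. \<phi> g - s n g) \<le> r n" for n
    using close r_nonneg by (intro dnorm_le) auto
  ultimately show ?thesis using that by blast
qed

definition bishop_phelps_le :: "real \<Rightarrow> ('a \<Rightarrow> real) \<Rightarrow> 'a functional \<Rightarrow> 'a functional \<Rightarrow> bool" where
  "bishop_phelps_le \<eta> f \<phi> \<psi> \<longleftrightarrow> \<eta> * N (\<lambda>g. \<psi> g - \<phi> g) \<le> \<psi> f - \<phi> f"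

lemma bishop_phelps_le_refl: "bishop_phelps_le \<eta> f \<phi> \<phi>"
  by (simp add: bishop_phelps_le_def dnorm_zero)

lemma bishop_phelps_le_trans:
  assumes "0 \<le> \<eta>" "\<phi> \<in> F" "\<psi> \<in> F" "\<rho> \<in> F"
    and "bishop_phelps_le \<eta> f \<phi> \<psi>" "bishop_phelps_le \<eta> f \<psi> \<rho>"
  shows "bishop_phelps_le \<eta> f \<phi> \<rho>"
proof -
  have "\<eta> * N (\<lambda>g. \<rho> g - \<phi> g) \<le> \<eta> * (N (\<lambda>g. \<rho> g - \<psi> g) + N (\<lambda>g. \<psi> g - \<phi> g))"
    using dnorm_triangle[OF assms(4,3,2)] assms(1) by (rule mult_left_mono)
  then show ?thesis using assms(5,6) unfolding bishop_phelps_le_def by (simp add: distrib_left)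
qed

text \<open>An increasing chain in the ball along which the value at \<open>f\<close> nearly attains its supremum
  over the remaining upper set; this forces the upper sets to shrink geometrically.\<close>

lemma bishop_phelps_chain:
  assumes f: "f \<in> L" and \<eta>: "\<eta> > 0"
  obtains t where "\<And>n. t n \<in> B" "\<And>m n. n \<le> m \<Longrightarrow> bishop_phelps_le \<eta> f (t n) (t m)"
    "\<And>n \<phi>. \<phi> \<in> B \<Longrightarrow> bishop_phelps_le \<eta> f (t n) \<phi> \<Longrightarrow> \<eta> * N (\<lambda>g. \<phi> g - t n g) \<le> (1/2) ^ n"
proof -
  let ?le = "bishop_phelps_le \<eta> f"
  define S where "S \<phi> = {\<psi> \<in> B. ?le \<phi> \<psi>}" for \<phi>
  define sup where "sup \<phi> = Sup ((\<lambda>\<psi>. \<psi> f) ` S \<phi>)" for \<phi>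
  have trans: "?le \<phi> \<rho>" if "\<phi> \<in> B" "\<psi> \<in> B" "\<rho> \<in> B" "?le \<phi> \<psi>" "?le \<psi> \<rho>" for \<phi> \<psi> \<rho>
    using bishop_phelps_le_trans[of \<eta> \<phi> \<psi> \<rho>] that \<eta> by (simp add: free_ball_iff)
  have S_bdd: "bdd_above ((\<lambda>\<psi>. \<psi> f) ` S \<phi>)" for \<phi>
    using abs_eval_free_ball_le[OF _ f] unfolding S_def
    by (intro bdd_aboveI[where M="nrm f"]) (auto simp: abs_le_iff)
  have next_exists: "\<exists>\<psi>. \<psi> \<in> S \<phi> \<and> sup \<phi> - (1/2) ^ n \<le> \<psi> f" if "\<phi> \<in> B" for \<phi> n
  proof -
    have "sup \<phi> - (1/2) ^ n < Sup ((\<lambda>\<psi>. \<psi> f) ` S \<phi>)" unfolding sup_def by simp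
    moreover have "(\<lambda>\<psi>. \<psi> f) ` S \<phi> \<noteq> {}" using that bishop_phelps_le_refl unfolding S_def by blast
    ultimately obtain y where "y \<in> (\<lambda>\<psi>. \<psi> f) ` S \<phi>" "sup \<phi> - (1/2) ^ n < y"
      by (rule less_cSupE)
    then show ?thesis by (auto elim!: imageE)
  qed
  define next_point where "next_point n \<phi> = (SOME \<psi>. \<psi> \<in> S \<phi> \<and> sup \<phi> - (1/2) ^ n \<le> \<psi> f)" for n \<phi>
  have next_point: "next_point n \<phi> \<in> S \<phi>" "sup \<phi> - (1/2) ^ n \<le> next_point n \<phi> f" if "\<phi> \<in> B" for \<phi> n
    using someI_ex[OF next_exists[OF that, of n]] unfolding next_point_def by blast+
  define s where "s = rec_nat (\<lambda>_. 0) next_point"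
  have s_Suc: "s (Suc n) = next_point n (s n)" for n by (simp add: s_def)
  have sB: "s n \<in> B" for n
    by (induction n) (use zero_in_free_ball next_point(1) s_Suc in \<open>auto simp: s_def S_def\<close>)
  have s_step: "?le (s n) (s (Suc n))" for n using next_point(1)[OF sB[of n]] s_Suc by (simp add: S_def)
  have s_mono: "?le (s n) (s m)" if "n \<le> m" for n m
    using that
  proof (induction m rule: dec_induct)
    case base then show ?case by (rule bishop_phelps_le_refl)
  next
    case (step m) then show ?case using trans[OF sB sB sB _ s_step] by blast
  qed
  show ?thesis
  proof (rule that[of "\<lambda>n. s (Suc n)"])
    show "s (Suc n) \<in> B" for n by (rule sB)
    show "?le (s (Suc n)) (s (Suc m))" if "n \<le> m" for m n using s_mono that by simp
  next
    fix n \<phi> assume \<phi>: "\<phi> \<in> B" and le: "?le (s (Suc n)) \<phi>"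
    then have "\<phi> \<in> S (s n)" using trans[OF sB sB \<phi> s_step] by (simp add: S_def)
    then have "\<phi> f \<le> sup (s n)" unfolding sup_def using S_bdd by (intro cSup_upper) auto
    moreover have "sup (s n) - (1/2) ^ n \<le> s (Suc n) f" using next_point(2)[OF sB] s_Suc by simp
    ultimately show "\<eta> * N (\<lambda>g. \<phi> g - s (Suc n) g) \<le> (1/2) ^ n"
      using le unfolding bishop_phelps_le_def by linarith
  qed
qed

lemma bishop_phelps_chain_limit:
  assumes f: "f \<in> L" and \<eta>: "\<eta> > 0" and tB: "\<And>n. t n \<in> B"
    and t_mono: "\<And>m n. n \<le> m \<Longrightarrow> bishop_phelps_le \<eta> f (t n) (t m)"
    and t_small: "\<And>n \<phi>. \<phi> \<in> B \<Longrightarrow> bishop_phelps_le \<eta> f (t n) \<phi> \<Longrightarrow> \<eta> * N (\<lambda>g. \<phi> g - t n g) \<le> (1/2) ^ n"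
  obtains \<phi>0 where "\<phi>0 \<in> B" "\<And>n. \<eta> * N (\<lambda>g. \<phi>0 g - t n g) \<le> (1/2) ^ n"
    "\<And>n. bishop_phelps_le \<eta> f (t n) \<phi>0"
proof -
  have tF: "t n \<in> F" for n using tB by (simp add: free_ball_iff)
  define r where "r n = (1/2) ^ n / \<eta>" for n :: nat
  have r_iff: "X \<le> r n \<longleftrightarrow> \<eta> * X \<le> (1/2) ^ n" for X n
    using \<eta> by (simp add: r_def le_divide_eq mult.commute)
  have r0: "r \<longlonglongrightarrow> 0" unfolding r_def by (intro tendsto_divide_zero LIMSEQ_power_zero) simp
  have bound: "N (\<lambda>g. t m g - t n g) \<le> r n" if "n \<le> m" for m n
    using r_iff t_small[OF tB t_mono[OF that]] by blast
  obtain \<phi>0 where \<phi>0F: "\<phi>0 \<in> F" and close: "\<And>n. N (\<lambda>g. \<phi>0 g - t n g) \<le> r n"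
    using FreeSp_Cauchy_limit[OF tF bound r0] by metis
  have "N \<phi>0 \<le> 1 + (1/2) ^ n * (1 / \<eta>)" for n
    using dnorm_add[OF free.diff[OF \<phi>0F tF[of n]] tF[of n]] close[of n] tB[of n]
    by (simp add: free_ball_iff r_def)
  then have \<phi>0B: "\<phi>0 \<in> B"
    using le_if_le_plus_half_pow_mult[of "N \<phi>0" 1 "1 / \<eta>"] \<phi>0F \<eta> by (simp add: free_ball_iff)
  have "bishop_phelps_le \<eta> f (t n) \<phi>0" for n
  proof -
    have "\<eta> * N (\<lambda>g. \<phi>0 g - t n g) \<le> \<phi>0 f - t n f + (1/2) ^ k * (1 + nrm f / \<eta>)" for k
    proof -
      let ?m = "k + n"
      have "\<eta> * N (\<lambda>g. \<phi>0 g - t n g) \<le> \<eta> * N (\<lambda>g. \<phi>0 g - t ?m g) + \<eta> * N (\<lambda>g. t ?m g - t n g)"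
        using mult_left_mono[OF dnorm_triangle[OF \<phi>0F tF[of ?m] tF[of n]] less_imp_le[OF \<eta>]]
        by (simp add: distrib_left)
      also have "\<eta> * N (\<lambda>g. \<phi>0 g - t ?m g) \<le> (1/2) ^ ?m" using close[of ?m] r_iff by blast
      also have "\<eta> * N (\<lambda>g. t ?m g - t n g) \<le> t ?m f - t n f"
        using t_mono[of n ?m] by (simp add: bishop_phelps_le_def)
      also have "t ?m f \<le> \<phi>0 f + (1/2) ^ ?m * (nrm f / \<eta>)"
      proof -
        have "\<bar>\<phi>0 f - t ?m f\<bar> \<le> r ?m * nrm f"
          using abs_eval_le_dnorm_lipnorm[OF free.diff[OF \<phi>0F tF] f, of ?m]
            mult_right_mono[OF close[of ?m] lipnorm_nonneg[OF f]] by simp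
        then show ?thesis by (simp add: r_def abs_le_iff)
      qed
      finally have "\<eta> * N (\<lambda>g. \<phi>0 g - t n g) \<le> \<phi>0 f - t n f + (1/2) ^ ?m * (1 + nrm f / \<eta>)"
        by (simp add: algebra_simps)
      moreover have "(1/2::real) ^ ?m * (1 + nrm f / \<eta>) \<le> (1/2) ^ k * (1 + nrm f / \<eta>)"
        using lipnorm_nonneg[OF f] \<eta> by (intro mult_right_mono power_decreasing) auto
      ultimately show ?thesis by linarith
    qed
    then show ?thesis
      unfolding bishop_phelps_le_def
      by (rule le_if_le_plus_half_pow_mult) (use lipnorm_nonneg[OF f] \<eta> in simp)
  qed
  moreover have "\<eta> * N (\<lambda>g. \<phi>0 g - t n g) \<le> (1/2) ^ n" for n using close r_iff by blast
  ultimately show ?thesis using that \<phi>0B by blast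
qed

lemma Ekeland_free_ball:
  assumes f: "f \<in> L" and \<eta>: "\<eta> > 0"
  obtains \<phi>0 where "\<phi>0 \<in> B" "\<And>\<phi>. \<phi> \<in> B \<Longrightarrow> \<phi> f - \<phi>0 f \<le> \<eta> * N (\<lambda>g. \<phi> g - \<phi>0 g)"
proof -
  obtain t where tB: "\<And>n. t n \<in> B" and t_mono: "\<And>m n. n \<le> m \<Longrightarrow> bishop_phelps_le \<eta> f (t n) (t m)"
    and t_small: "\<And>n \<phi>. \<phi> \<in> B \<Longrightarrow> bishop_phelps_le \<eta> f (t n) \<phi> \<Longrightarrow> \<eta> * N (\<lambda>g. \<phi> g - t n g) \<le> (1/2) ^ n"
    using bishop_phelps_chain[OF f \<eta>] by blast
  obtain \<phi>0 where \<phi>0B: "\<phi>0 \<in> B" and close: "\<And>n. \<eta> * N (\<lambda>g. \<phi>0 g - t n g) \<le> (1/2) ^ n"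
    and above: "\<And>n. bishop_phelps_le \<eta> f (t n) \<phi>0"
    using bishop_phelps_chain_limit[OF f \<eta> tB t_mono t_small] by blast
  have tF: "t n \<in> F" for n using tB by (simp add: free_ball_iff)
  have \<phi>0F: "\<phi>0 \<in> F" using \<phi>0B by (simp add: free_ball_iff)
  show ?thesis
  proof (rule that[OF \<phi>0B])
    fix \<phi> assume \<phi>B: "\<phi> \<in> B"
    then have \<phi>F: "\<phi> \<in> F" by (simp add: free_ball_iff)
    show "\<phi> f - \<phi>0 f \<le> \<eta> * N (\<lambda>g. \<phi> g - \<phi>0 g)"
    proof (rule ccontr)
      assume neg: "\<not> ?thesis"
      then have "bishop_phelps_le \<eta> f \<phi>0 \<phi>" by (simp add: bishop_phelps_le_def)
      then have le_t: "bishop_phelps_le \<eta> f (t n) \<phi>" for n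
        using bishop_phelps_le_trans[OF _ tF \<phi>0F \<phi>F above] \<eta> by simp
      have "\<eta> * N (\<lambda>g. \<phi> g - \<phi>0 g) \<le> 0 + (1/2) ^ n * 2" for n
      proof -
        have "\<eta> * N (\<lambda>g. \<phi> g - \<phi>0 g) \<le> \<eta> * N (\<lambda>g. \<phi> g - t n g) + \<eta> * N (\<lambda>g. \<phi>0 g - t n g)"
          using mult_left_mono[OF dnorm_triangle[OF \<phi>F tF[of n] \<phi>0F] less_imp_le[OF \<eta>]]
            dnorm_diff_commute[OF \<phi>0F tF[of n]] by (simp add: distrib_left)
        then show ?thesis using t_small[OF \<phi>B le_t[of n]] close[of n] by linarith
      qed
      then have "\<eta> * N (\<lambda>g. \<phi> g - \<phi>0 g) \<le> 0" by (rule le_if_le_plus_half_pow_mult) simp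
      then have "N (\<lambda>g. \<phi> g - \<phi>0 g) = 0"
        using dnorm_nonneg[OF free.diff[OF \<phi>F \<phi>0F]] \<eta> by (simp add: mult_le_0_iff)
      then show False
        using neg abs_eval_le_dnorm_lipnorm[OF free.diff[OF \<phi>F \<phi>0F] f] by simp
    qed
  qed
qed

lemma free_ball_cone_add:
  assumes "\<phi>0 \<in> B" "\<phi>1 \<in> B" "\<phi>2 \<in> B" "0 \<le> t1" "0 \<le> t2"
  obtains t \<phi> where "0 \<le> t" "\<phi> \<in> B"
    "(\<lambda>g. t1 * (\<phi>1 g - \<phi>0 g) + t2 * (\<phi>2 g - \<phi>0 g)) = (\<lambda>g. t * (\<phi> g - \<phi>0 g))"
proof (cases "t1 + t2 = 0")
  case True
  then have "t1 = 0" "t2 = 0" using assms(4,5) by simp_all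
  then show ?thesis using that[of 0 \<phi>0] assms(1) by simp
next
  case False
  then have t: "t1 + t2 > 0" using assms(4,5) by simp
  define \<phi> where "\<phi> = (\<lambda>g. (t1 / (t1 + t2)) * \<phi>1 g + (1 - t1 / (t1 + t2)) * \<phi>2 g)"
  have "0 \<le> t1 / (t1 + t2)" "t1 / (t1 + t2) \<le> 1" using assms(4,5) t by simp_all
  then have "\<phi> \<in> B"
    unfolding \<phi>_def using fconvex_free_ball assms(2,3) unfolding fconvex_def by blast
  moreover have "(\<lambda>g. t1 * (\<phi>1 g - \<phi>0 g) + t2 * (\<phi>2 g - \<phi>0 g)) = (\<lambda>g. (t1 + t2) * (\<phi> g - \<phi>0 g))"
  proof
    fix g
    let ?a = "t1 / (t1 + t2)"
    have ring: "s * (a * x + (1 - a) * y - z) = (s * a) * (x - z) + (s * (1 - a)) * (y - z)"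
      for s a x y z :: real by (simp add: algebra_simps)
    have "(t1 + t2) * (\<phi> g - \<phi>0 g) = ((t1 + t2) * ?a) * (\<phi>1 g - \<phi>0 g) + ((t1 + t2) * (1 - ?a)) * (\<phi>2 g - \<phi>0 g)"
      unfolding \<phi>_def by (rule ring)
    moreover have "(t1 + t2) * ?a = t1" "(t1 + t2) * (1 - ?a) = t2" using t by (simp_all add: field_simps)
    ultimately show "t1 * (\<phi>1 g - \<phi>0 g) + t2 * (\<phi>2 g - \<phi>0 g) = (t1 + t2) * (\<phi> g - \<phi>0 g)" by simp
  qed
  ultimately show ?thesis using that[of "t1 + t2" \<phi>] t by simp
qed

definition ball_cone :: "'a functional \<Rightarrow> 'a functional set" where
  "ball_cone \<phi>0 = {(\<lambda>g. t * (\<phi> g - \<phi>0 g)) | t \<phi>. 0 \<le> t \<and> \<phi> \<in> B}"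

lemma ball_coneE:
  assumes "k \<in> ball_cone \<phi>0"
  obtains t \<phi> where "0 \<le> t" "\<phi> \<in> B" "k = (\<lambda>g. t * (\<phi> g - \<phi>0 g))"
  using assms unfolding ball_cone_def by blast

lemma ball_coneI: "0 \<le> t \<Longrightarrow> \<phi> \<in> B \<Longrightarrow> (\<lambda>g. t * (\<phi> g - \<phi>0 g)) \<in> ball_cone \<phi>0"
  unfolding ball_cone_def by blast

lemma diff_in_ball_cone: "\<phi> \<in> B \<Longrightarrow> (\<lambda>g. \<phi> g - \<phi>0 g) \<in> ball_cone \<phi>0"
  using ball_coneI[of 1 \<phi> \<phi>0] by simp

lemma ball_cone_subset_FreeSp: "\<phi>0 \<in> B \<Longrightarrow> ball_cone \<phi>0 \<subseteq> F"
  by (auto elim!: ball_coneE intro!: free.scale free.diff simp: free_ball_iff)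

lemma zero_in_ball_cone: "\<phi>0 \<in> B \<Longrightarrow> (\<lambda>_. 0) \<in> ball_cone \<phi>0"
  using diff_in_ball_cone[of \<phi>0 \<phi>0] by simp

lemma ball_cone_add:
  assumes \<phi>0: "\<phi>0 \<in> B" and k: "k1 \<in> ball_cone \<phi>0" "k2 \<in> ball_cone \<phi>0"
  shows "(\<lambda>g. k1 g + k2 g) \<in> ball_cone \<phi>0"
proof -
  obtain t1 \<phi>1 where t1: "0 \<le> t1" "\<phi>1 \<in> B" and k1: "k1 = (\<lambda>g. t1 * (\<phi>1 g - \<phi>0 g))"
    using k(1) by (rule ball_coneE)
  obtain t2 \<phi>2 where t2: "0 \<le> t2" "\<phi>2 \<in> B" and k2: "k2 = (\<lambda>g. t2 * (\<phi>2 g - \<phi>0 g))"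
    using k(2) by (rule ball_coneE)
  obtain t \<phi> where "0 \<le> t" "\<phi> \<in> B"
    and "(\<lambda>g. t1 * (\<phi>1 g - \<phi>0 g) + t2 * (\<phi>2 g - \<phi>0 g)) = (\<lambda>g. t * (\<phi> g - \<phi>0 g))"
    using free_ball_cone_add[OF \<phi>0 t1(2) t2(2) t1(1) t2(1)] by metis
  then show ?thesis unfolding k1 k2 by (simp add: ball_coneI)
qed

lemma ball_cone_scale:
  assumes k: "k \<in> ball_cone \<phi>0" and c: "0 \<le> c"
  shows "(\<lambda>g. c * k g) \<in> ball_cone \<phi>0"
proof -
  obtain t \<phi> where "0 \<le> t" "\<phi> \<in> B" "k = (\<lambda>g. t * (\<phi> g - \<phi>0 g))" using k by (rule ball_coneE)
  then show ?thesis using ball_coneI[of "c * t" \<phi> \<phi>0] c by (simp add: mult.assoc)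
qed

text \<open>The representing function is \<open>x \<mapsto> h (\<delta> x)\<close>.\<close>

lemma FreeSp_dual_representation:
  assumes h: "linear_on F h" and C: "0 \<le> C" and h_le: "\<And>\<psi>. \<psi> \<in> F \<Longrightarrow> h \<psi> \<le> C * N \<psi>"
  obtains g where "g \<in> L" "nrm g \<le> C" "\<And>\<phi>. \<phi> \<in> F \<Longrightarrow> \<phi> g = h \<phi>"
proof -
  have h_abs: "\<bar>h \<psi>\<bar> \<le> C * N \<psi>" if \<psi>: "\<psi> \<in> F" for \<psi>
    using h_le[OF \<psi>] h_le[OF free.scale[OF \<psi>, of "-1"]] linear_on_scale[OF h \<psi>, of "-1"]
      dnorm_scale[OF \<psi>, of "-1"]
    by (simp add: abs_le_iff)
  define g where "g x = (if x \<in> M then h (delta M d p x) else 0)" for x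
  have g_Lipschitz: "\<bar>g x - g y\<bar> \<le> C * d x y" if xy: "x \<in> M" "y \<in> M" for x y
  proof -
    have \<delta>: "delta M d p x \<in> F" "delta M d p y \<in> F" using delta_in_FreeSp xy by simp_all
    have "\<bar>g x - g y\<bar> = \<bar>h (\<lambda>f. delta M d p x f - delta M d p y f)\<bar>"
      using free.linear_on_diff[OF h \<delta>] xy by (simp add: g_def)
    also have "\<dots> \<le> C * N (\<lambda>f. delta M d p x f - delta M d p y f)" by (rule h_abs[OF free.diff[OF \<delta>]])
    also have "\<dots> \<le> C * d x y" using dnorm_delta_diff_le[OF xy] C by (rule mult_left_mono)
    finally show ?thesis .
  qed
  have "delta M d p p = (\<lambda>_. 0)" by (simp add: delta_def fun_eq_iff)
  then have gL: "g \<in> L"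
    using g_Lipschitz free.linear_on_zero[OF h] base_in by (intro Lip0I) (simp_all add: g_def)
  have "\<phi> g = h \<phi>" if \<phi>: "\<phi> \<in> F" for \<phi>
  proof -
    have "\<bar>\<phi> g - h \<phi>\<bar> \<le> 0 + e * (nrm g + C)" if e: "e > 0" for e
    proof -
      obtain \<psi> where \<psi>: "\<psi> \<in> delta_span M d p" "\<forall>f\<in>L. \<bar>\<phi> f - \<psi> f\<bar> \<le> e * nrm f"
        using FreeSp_approx[OF \<phi> e] by blast
      obtain S a where S: "finite S" "S \<subseteq> M" "\<psi> = (\<lambda>f. \<Sum>x\<in>S. a x * delta M d p x f)"
        using \<psi>(1) by (rule delta_spanE)
      have \<psi>F: "\<psi> \<in> F" using \<psi>(1) delta_span_subset_FreeSp by blast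
      have "h \<psi> = (\<Sum>x\<in>S. a x * h (delta M d p x))"
        unfolding S(3) using S(1,2) delta_in_FreeSp by (intro free.linear_on_sum[OF h]) auto
      also have "\<dots> = \<psi> g" using S gL by (simp add: g_def subset_iff)
      finally have h\<psi>: "h \<psi> = \<psi> g" .
      have "N (\<lambda>f. \<phi> f - \<psi> f) \<le> e" using \<psi>(2) e by (intro dnorm_le) auto
      then have "\<bar>h \<phi> - h \<psi>\<bar> \<le> e * C"
        using h_abs[OF free.diff[OF \<phi> \<psi>F]] free.linear_on_diff[OF h \<phi> \<psi>F] mult_left_mono[OF _ C]
        by (metis order_trans mult.commute)
      moreover have "\<bar>\<phi> g - \<psi> g\<bar> \<le> e * nrm g" using \<psi>(2) gL by blast
      ultimately show ?thesis using h\<psi> by (simp only: abs_le_iff distrib_left) linarith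
    qed
    moreover have "0 \<le> nrm g + C" using lipnorm_nonneg[OF gL] C by simp
    ultimately have "\<bar>\<phi> g - h \<phi>\<bar> \<le> 0" by (rule le_if_le_plus_eps_mult)
    then show ?thesis by simp
  qed
  moreover have "nrm g \<le> C" using g_Lipschitz C by (intro lipnorm_le) auto
  ultimately show ?thesis using that gL by blast
qed

lemma NA_freeI:
  assumes G: "G \<in> L" and \<phi>0: "\<phi>0 \<in> B" and maximal: "\<And>\<phi>. \<phi> \<in> B \<Longrightarrow> \<phi> G \<le> \<phi>0 G"
  shows "G \<in> NA_free M d p"
proof -
  have "0 \<le> \<phi>0 G" using maximal[OF zero_in_free_ball] by simp
  moreover have "nrm G \<le> \<phi>0 G"
  proof (rule lipnorm_le[OF \<open>0 \<le> \<phi>0 G\<close>])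
    fix x y assume xy: "x \<in> M" "y \<in> M" "x \<noteq> y"
    have "(G x - G y) / d x y \<le> \<phi>0 G" "(G y - G x) / d x y \<le> \<phi>0 G"
      using maximal[OF molecule_in_free_ball[OF xy]] maximal[OF molecule_in_free_ball[OF xy(2,1) xy(3)[symmetric]]]
        molecule_eval[OF G] commute[of x y] by simp_all
    then show "\<bar>G x - G y\<bar> \<le> \<phi>0 G * d x y"
      using mdist_pos_less[OF xy(3,1,2)] by (simp add: divide_le_eq abs_le_iff)
  qed
  moreover have "\<phi>0 G \<le> nrm G" using abs_eval_free_ball_le[OF \<phi>0 G] by simp
  ultimately show ?thesis unfolding NA_free_def using G \<phi>0 by force
qed

lemma Ekeland_point_separation:
  assumes \<eta>: "\<eta> > 0" and \<phi>0: "\<phi>0 \<in> B"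
    and Ekeland: "\<And>\<phi>. \<phi> \<in> B \<Longrightarrow> \<phi> f - \<phi>0 f \<le> \<eta> * N (\<lambda>g. \<phi> g - \<phi>0 g)"
  obtains h where "linear_on F h" "\<And>\<psi>. \<psi> \<in> F \<Longrightarrow> h \<psi> \<le> \<eta> * N \<psi>"
    "\<And>\<phi>. \<phi> \<in> B \<Longrightarrow> h \<phi> - h \<phi>0 \<le> \<phi>0 f - \<phi> f"
proof -
  have \<phi>0F: "\<phi>0 \<in> F" using \<phi>0 by (simp add: free_ball_iff)
  have ev: "linear_on F (\<lambda>\<psi>. \<psi> f)" by (rule linear_onI) simp_all
  have ev_le: "k f \<le> \<eta> * N k" if k: "k \<in> ball_cone \<phi>0" for k
  proof -
    obtain t \<phi> where t\<phi>: "0 \<le> t" "\<phi> \<in> B" "k = (\<lambda>g. t * (\<phi> g - \<phi>0 g))"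
      using k by (rule ball_coneE)
    have "t * (\<phi> f - \<phi>0 f) \<le> t * (\<eta> * N (\<lambda>g. \<phi> g - \<phi>0 g))"
      using Ekeland[OF t\<phi>(2)] t\<phi>(1) by (rule mult_left_mono)
    then show ?thesis
      using t\<phi> dnorm_scale[OF free.diff[OF _ \<phi>0F], of \<phi> t] by (simp add: free_ball_iff mult_ac)
  qed
  have p_add: "\<eta> * N (\<lambda>b. x b + y b) \<le> \<eta> * N x + \<eta> * N y" if "x \<in> F" "y \<in> F" for x y
    using mult_left_mono[OF dnorm_add[OF that] less_imp_le[OF \<eta>]] by (simp add: distrib_left)
  have p_scale: "\<eta> * N (\<lambda>b. c * x b) = \<bar>c\<bar> * (\<eta> * N x)" if "x \<in> F" for x c
    using dnorm_scale[OF that] by simp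
  have "\<exists>h. linear_on F h \<and> (\<forall>\<psi>\<in>F. h \<psi> \<le> \<eta> * N \<psi>) \<and> (\<forall>k\<in>ball_cone \<phi>0. h k \<le> - k f)"
    by (rule free.seminorm_cone_separation[of "\<lambda>\<psi>. \<eta> * N \<psi>", OF p_add p_scale
          ball_cone_subset_FreeSp[OF \<phi>0] zero_in_ball_cone[OF \<phi>0] ball_cone_add[OF \<phi>0] ball_cone_scale ev ev_le])
  then obtain h where h: "linear_on F h" and h_le: "\<And>\<psi>. \<psi> \<in> F \<Longrightarrow> h \<psi> \<le> \<eta> * N \<psi>"
    and h_cone: "\<And>k. k \<in> ball_cone \<phi>0 \<Longrightarrow> h k \<le> - k f"
    by blast
  have "h \<phi> - h \<phi>0 \<le> \<phi>0 f - \<phi> f" if \<phi>: "\<phi> \<in> B" for \<phi>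
  proof -
    have \<phi>F: "\<phi> \<in> F" using \<phi> by (simp add: free_ball_iff)
    have "h (\<lambda>g. \<phi> g - \<phi>0 g) \<le> - (\<phi> f - \<phi>0 f)" by (rule h_cone[OF diff_in_ball_cone[OF \<phi>]])
    then show ?thesis using free.linear_on_diff[OF h \<phi>F \<phi>0F] by simp
  qed
  then show ?thesis using that h h_le by blast
qed

text \<open>The functional separating the ball from the cone of directions at the Ekeland point \<open>\<phi>0\<close>
  is a small Lipschitz perturbation of \<open>f\<close> after which \<open>\<phi>0\<close> is norming.\<close>

theorem Bishop_Phelps_free:
  assumes f: "f \<in> L" and \<eta>: "\<eta> > 0"
  obtains g where "g \<in> L" "nrm g \<le> \<eta>" "(\<lambda>x. f x + g x) \<in> NA_free M d p"
proof -
  obtain \<phi>0 where \<phi>0: "\<phi>0 \<in> B" and Ekeland: "\<And>\<phi>. \<phi> \<in> B \<Longrightarrow> \<phi> f - \<phi>0 f \<le> \<eta> * N (\<lambda>g. \<phi> g - \<phi>0 g)"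
    using Ekeland_free_ball[OF f \<eta>] by blast
  obtain h where h: "linear_on F h" and h_le: "\<And>\<psi>. \<psi> \<in> F \<Longrightarrow> h \<psi> \<le> \<eta> * N \<psi>"
    and h_sep: "\<And>\<phi>. \<phi> \<in> B \<Longrightarrow> h \<phi> - h \<phi>0 \<le> \<phi>0 f - \<phi> f"
    using Ekeland_point_separation[OF \<eta> \<phi>0 Ekeland] by blast
  obtain g where gL: "g \<in> L" and g_small: "nrm g \<le> \<eta>" and g_h: "\<And>\<phi>. \<phi> \<in> F \<Longrightarrow> \<phi> g = h \<phi>"
    using FreeSp_dual_representation[OF h less_imp_le[OF \<eta>] h_le] by blast
  have eval: "\<phi> (\<lambda>x. f x + g x) = \<phi> f + h \<phi>" if "\<phi> \<in> B" for \<phi>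
    using that linear_on_add[OF linear_on_FreeSp f gL] g_h by (simp add: free_ball_iff)
  have "\<phi> (\<lambda>x. f x + g x) \<le> \<phi>0 (\<lambda>x. f x + g x)" if "\<phi> \<in> B" for \<phi>
    using h_sep[OF that] eval[OF that] eval[OF \<phi>0] by simp
  then have "(\<lambda>x. f x + g x) \<in> NA_free M d p" by (rule NA_freeI[OF Lip.add[OF f gL] \<phi>0])
  then show ?thesis using that gL g_small by blast
qed

lemma Lip_SNA_dense:
  assumes "NA_free M d p \<subseteq> Lip_SNA M d p" and f: "f \<in> L" and \<epsilon>: "\<epsilon> > 0"
  shows "\<exists>g\<in>Lip_SNA M d p. nrm (\<lambda>x. f x - g x) < \<epsilon>"
proof -
  obtain g where g: "g \<in> L" "nrm g \<le> \<epsilon> / 2" and NA: "(\<lambda>x. f x + g x) \<in> NA_free M d p"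
    using Bishop_Phelps_free[OF f, of "\<epsilon> / 2"] \<epsilon> by auto
  have "nrm (\<lambda>x. f x - (f x + g x)) \<le> \<bar>-1\<bar> * nrm g"
    using lipnorm_scale_le[OF g(1), of "-1"] by simp
  then show ?thesis using assms(1) NA g(2) \<epsilon> by (intro bexI[of _ "\<lambda>x. f x + g x"]) auto
qed

end

theorem proposition7p1:
  fixes M :: "'a set" and d :: "'a \<Rightarrow> 'a \<Rightarrow> real" and p :: 'a
  assumes "Metric_space M d" and "p \<in> M"
    and "free_KMP M d p"
    and "\<forall>e. fextreme_point (free_ball M d p) e \<longrightarrow>
           (\<exists>x\<in>M. \<exists>y\<in>M. x \<noteq> y \<and> e = molecule M d p x y)"
  shows "NA_free M d p = Lip_SNA M d p \<and>
         (\<forall>f\<in>Lip0 M d p. \<forall>\<epsilon>>0. \<exists>g\<in>Lip_SNA M d p. lipnorm M d (\<lambda>x. f x - g x) < \<epsilon>)"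
proof -
  interpret pointed_metric M d p
    using assms(1,2) by (intro pointed_metric.intro pointed_metric_axioms.intro)
  have "NA_free M d p = Lip_SNA M d p"
    using NA_free_subset_Lip_SNA[OF assms(3,4)] Lip_SNA_subset_NA_free by blast
  then show ?thesis using Lip_SNA_dense by blast
qed

end
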